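(* Let $d\ge1$, $\sigma>0$, and let $(P_t)_{t\ge0}$ be the heat semigroup generated by $(Lf)(p,\xi)=\sum_{j=1}^d p_j\,\partial_{\xi_j}f(p,\xi)+\frac{\sigma^2}{2}\Delta_p f(p,\xi)$ on $\mathbb{R}^d\times\mathbb{R}^d$. Let $f$ be a non-negative bounded Borel function on $\mathbb{R}^d\times\mathbb{R}^d$. Then for every $t>0$, all $(p,\xi),(p',\xi')\in\mathbb{R}^d\times\mathbb{R}^d$ and every $\alpha>1$, \[(P_tf)^\alpha(p,\xi)\le C_\alpha\big(t,(p,\xi),(p',\xi')\big)\,(P_tf^\alpha)(p',\xi'),\] where \[C_\alpha\big(t,(p,\xi),(p',\xi')\big)=\exp\left(\frac{\alpha}{\alpha-1}\left(\frac{6}{\sigma^2t^3}\sum_{i=1}^d\Big(\frac t2(p_i'-p_i)+(\xi_i'-\xi_i)\Big)^2+\frac{1}{2\sigma^2t}\sum_{i=1}^d(p_i'-p_i)^2\right)\right).\]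
   Context: $P_tf(p,\xi)=\mathbb{E}\,f\big(p+B_t,\xi+tp+\int_0^tB_sds\big)$, where $B$ is a Brownian motion in $\mathbb{R}^d$ with variance $\sigma^2$ started at $0$. *)

theory Defs
  imports "HOL-Probability.Probability"
begin

definition brownian_motion ::
  "'a measure \<Rightarrow> real \<Rightarrow> (real \<Rightarrow> 'a \<Rightarrow> real ^ 'n) \<Rightarrow> bool" where
  "brownian_motion M \<sigma> B \<longleftrightarrow>
     prob_space M \<and>
     (\<forall>t\<ge>0. B t \<in> borel_measurable M) \<and>
     (\<forall>\<omega>\<in>space M. B 0 \<omega> = 0) \<and>
     (\<forall>\<omega>\<in>space M. continuous_on {0..} (\<lambda>t. B t \<omega>)) \<and>
     (\<forall>(n::nat) (ts::nat \<Rightarrow> real). 0 \<le> ts 0 \<and> (\<forall>j<n. ts j < ts (Suc j)) \<longrightarrow>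
        prob_space.indep_vars M (\<lambda>_. borel)
          (\<lambda>(j, i) \<omega>. (B (ts (Suc j)) \<omega> - B (ts j) \<omega>) $ i) ({..<n} \<times> UNIV) \<and>
        (\<forall>j<n. \<forall>i. distributed M lborel (\<lambda>\<omega>. (B (ts (Suc j)) \<omega> - B (ts j) \<omega>) $ i)
                 (\<lambda>x. ennreal (normal_density 0 (\<sigma> * sqrt (ts (Suc j) - ts j)) x))))"

definition kolmogorov_semigroup ::
  "'a measure \<Rightarrow> (real \<Rightarrow> 'a \<Rightarrow> real ^ 'n) \<Rightarrow> real \<Rightarrow>
     ((real ^ 'n) \<times> (real ^ 'n) \<Rightarrow> real) \<Rightarrow> (real ^ 'n) \<times> (real ^ 'n) \<Rightarrow> real" where
  "kolmogorov_semigroup M B t f = (\<lambda>(p, \<xi>).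
     integral\<^sup>L M (\<lambda>\<omega>. f (p + B t \<omega>, \<xi> + t *\<^sub>R p + integral {0..t} (\<lambda>s. B s \<omega>))))"

end

theory Submission
  imports Defs
begin

text \<open>Let X = (B t, integral of B over [0, t]). Then P_t f (p, xi) = E f (m + X + c) with
  m = (p', xi' + t p') and c = (p - p', xi + t p - xi' - t p'). If B is given a deterministic drift h
  with integral a and first moment integral of (t - s) h(s) equal to b, then X is shifted by (a, b),
  and by Girsanov's theorem E f (m + X + c) = E (rho f (m + X)) for an explicit density rho.
  Hoelder's inequality then gives (P_t f)^alpha (p, xi) <= (E rho^q)^(alpha - 1) P_t f^alpha (p', xi')
  with q = alpha / (alpha - 1), and E rho^q = exp (q (q - 1) energy(h) / (2 sigma^2)).
  Minimising the energy of h under the two linear constraints gives the constant.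

  We only use step drifts, constant on N blocks of length t / N: for these, the grid increments of B
  and of the drift are finite families of independent Gaussians, Girsanov's theorem is the
  Cameron--Martin formula for product Gaussians, and the integral of B is reached through Riemann
  sums on refined grids. The best step drift has energy larger than the optimum by the factor
  1 / (1 - 1 / N^2), which disappears as N tends to infinity.\<close>

section \<open>Gaussian translations\<close>

definition centered_normal :: "real \<Rightarrow> real measure" where
  "centered_normal s = density lborel (\<lambda>x. ennreal (normal_density 0 s x))"

definition cameron_martin_weight :: "real \<Rightarrow> real \<Rightarrow> real \<Rightarrow> real" where
  "cameron_martin_weight s d y = exp ((y * d - d\<^sup>2 / 2) / s\<^sup>2)"

lemma sets_centered_normal [measurable_cong, simp]: "sets (centered_normal s) = sets borel"
  by (simp add: centered_normal_def)

lemma space_centered_normal [simp]: "space (centered_normal s) = UNIV"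
  by (simp add: centered_normal_def)

lemma prob_space_centered_normal: "s > 0 \<Longrightarrow> prob_space (centered_normal s)"
  unfolding centered_normal_def by (rule prob_space_normal_density)

lemma cameron_martin_weight_pos [simp]: "0 < cameron_martin_weight s d y"
  by (simp add: cameron_martin_weight_def)

lemma cameron_martin_weight_measurable [measurable]:
  "cameron_martin_weight s d \<in> borel_measurable borel"
  unfolding cameron_martin_weight_def by measurable

lemma normal_density_mult_cameron_martin_weight:
  assumes "s > 0"
  shows "normal_density 0 s y * cameron_martin_weight s d y = normal_density d s y"
proof -
  have "-(y - 0)\<^sup>2 / (2 * s\<^sup>2) + (y * d - d\<^sup>2 / 2) / s\<^sup>2 = -(y - d)\<^sup>2 / (2 * s\<^sup>2)"
    using assms by (simp add: field_simps power2_eq_square)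
  then show ?thesis
    unfolding normal_density_def cameron_martin_weight_def by (simp add: mult.assoc flip: exp_add)
qed

lemma nn_integral_normal_density_translate:
  assumes [measurable]: "G \<in> borel_measurable borel"
  shows "(\<integral>\<^sup>+y. ennreal (normal_density 0 s y) * G (y + d) \<partial>lborel)
       = (\<integral>\<^sup>+y. ennreal (normal_density d s y) * G y \<partial>lborel)"
proof -
  have "(\<integral>\<^sup>+y. ennreal (normal_density d s y) * G y \<partial>lborel)
      = (\<integral>\<^sup>+y. ennreal (normal_density d s (d + y)) * G (d + y) \<partial>lborel)"
    using nn_integral_real_affine[of "\<lambda>y. ennreal (normal_density d s y) * G y" 1 d] by simp
  also have "\<dots> = (\<integral>\<^sup>+y. ennreal (normal_density 0 s y) * G (y + d) \<partial>lborel)"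
    by (simp add: normal_density_def add.commute)
  finally show ?thesis ..
qed

lemma nn_integral_centered_normal_cameron_martin_weight:
  assumes "s > 0" and [measurable]: "G \<in> borel_measurable borel"
  shows "(\<integral>\<^sup>+y. ennreal (cameron_martin_weight s d y) * G y \<partial>centered_normal s)
       = (\<integral>\<^sup>+y. ennreal (normal_density d s y) * G y \<partial>lborel)"
  unfolding centered_normal_def
  using normal_density_mult_cameron_martin_weight[OF assms(1)]
  by (subst nn_integral_density)
     (auto intro!: nn_integral_cong simp: mult.assoc[symmetric] ennreal_mult'[symmetric])

lemma nn_integral_centered_normal_cameron_martin_weight_powr:
  assumes "s > 0"
  shows "(\<integral>\<^sup>+y. ennreal (cameron_martin_weight s d y powr q) \<partial>centered_normal s)
       = ennreal (exp (q * (q - 1) * d\<^sup>2 / (2 * s\<^sup>2)))"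
proof -
  have completed_square: "normal_density 0 s y * cameron_martin_weight s d y powr q
      = exp (q * (q - 1) * d\<^sup>2 / (2 * s\<^sup>2)) * normal_density (q * d) s y" for y
  proof -
    have "-(y - 0)\<^sup>2 / (2 * s\<^sup>2) + q * ((y * d - d\<^sup>2 / 2) / s\<^sup>2)
        = q * (q - 1) * d\<^sup>2 / (2 * s\<^sup>2) + -(y - q * d)\<^sup>2 / (2 * s\<^sup>2)"
      using assms by (simp add: field_simps power2_eq_square)
    then show ?thesis
      unfolding normal_density_def cameron_martin_weight_def powr_def
      by (simp add: mult_ac flip: exp_add)
  qed
  have "(\<integral>\<^sup>+y. ennreal (cameron_martin_weight s d y powr q) \<partial>centered_normal s)
     = (\<integral>\<^sup>+y. ennreal (exp (q * (q - 1) * d\<^sup>2 / (2 * s\<^sup>2))) * ennreal (normal_density (q * d) s y) \<partial>lborel)"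
    unfolding centered_normal_def
    by (subst nn_integral_density)
       (auto intro!: nn_integral_cong simp: completed_square ennreal_mult'[symmetric])
  also have "\<dots> = ennreal (exp (q * (q - 1) * d\<^sup>2 / (2 * s\<^sup>2))) * (\<integral>\<^sup>+y. ennreal (normal_density (q * d) s y) \<partial>lborel)"
    by (rule nn_integral_cmult) simp
  also have "(\<integral>\<^sup>+y. ennreal (normal_density (q * d) s y) \<partial>lborel) = 1"
    using prob_space.emeasure_space_1[OF prob_space_normal_density[OF assms, of "q * d"]]
    by (simp add: emeasure_density)
  finally show ?thesis by simp
qed

lemma prod_indicator_PiE:
  assumes "finite I" "z \<in> extensional I"
  shows "(\<Prod>i\<in>I. indicator (A i) (z i) :: 'b::comm_semiring_1) = indicator (Pi\<^sub>E I A) z"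
proof (cases "z \<in> Pi\<^sub>E I A")
  case True
  then show ?thesis by (auto simp: indicator_def PiE_def Pi_def intro!: prod.neutral)
next
  case False
  with assms obtain i where "i \<in> I" "z i \<notin> A i" by (auto simp: PiE_def Pi_def)
  then show ?thesis using assms False by (auto intro!: prod_zero bexI[of _ i])
qed

lemma translate_PiM_measurable:
  "(\<lambda>z. \<lambda>i\<in>I. z i + \<delta> i) \<in> measurable (PiM I (\<lambda>_. centered_normal s)) (PiM I (\<lambda>_. lborel))"
  by (rule measurable_restrict)
     (simp add: measurable_cong_sets[OF sets_PiM_cong[OF refl sets_centered_normal] refl])

context
  fixes I :: "'i set" and s :: real and \<delta> :: "'i \<Rightarrow> real"
  assumes I: "finite I" and s: "s > 0"
begin

interpretation N: product_prob_space "\<lambda>_. centered_normal s"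
  by (rule product_prob_spaceI) (rule prob_space_centered_normal[OF s])

interpretation S: product_prob_space "\<lambda>i. density lborel (\<lambda>x. ennreal (normal_density (\<delta> i) s x))"
  by (rule product_prob_spaceI) (rule prob_space_normal_density[OF s])

lemma distr_PiM_centered_normal_translate:
  "distr (PiM I (\<lambda>_. centered_normal s)) (PiM I (\<lambda>_. lborel)) (\<lambda>z. \<lambda>i\<in>I. z i + \<delta> i)
     = PiM I (\<lambda>i. density lborel (\<lambda>x. ennreal (normal_density (\<delta> i) s x)))"
    (is "?D = PiM I ?S")
proof (rule S.PiM_eqI[OF I])
  show "sets ?D = sets (PiM I ?S)"
    unfolding sets_distr sets_density by (rule sets_PiM_cong) auto
  fix A assume "\<And>i. i \<in> I \<Longrightarrow> A i \<in> sets (?S i)"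
  then have A [measurable]: "\<And>i. i \<in> I \<Longrightarrow> A i \<in> sets borel" by simp
  have preimage: "(\<lambda>z. \<lambda>i\<in>I. z i + \<delta> i) -` Pi\<^sub>E I A \<inter> space (PiM I (\<lambda>_. centered_normal s))
      = Pi\<^sub>E I (\<lambda>i. {y. y + \<delta> i \<in> A i})"
    by (auto simp: space_PiM PiE_def Pi_def extensional_def)
  have "Pi\<^sub>E I A \<in> sets (PiM I (\<lambda>_. lborel))"
    using A I by (intro sets_PiM_I_finite) auto
  then have "emeasure ?D (Pi\<^sub>E I A)
      = emeasure (PiM I (\<lambda>_. centered_normal s)) (Pi\<^sub>E I (\<lambda>i. {y. y + \<delta> i \<in> A i}))"
    by (simp add: emeasure_distr[OF translate_PiM_measurable] preimage)
  also have "\<dots> = (\<Prod>i\<in>I. emeasure (centered_normal s) {y. y + \<delta> i \<in> A i})"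
    by (rule N.emeasure_PiM[OF I]) simp
  also have "\<dots> = (\<Prod>i\<in>I. emeasure (?S i) (A i))"
  proof (rule prod.cong[OF refl])
    fix i assume [measurable]: "i \<in> I"
    have "emeasure (centered_normal s) {y. y + \<delta> i \<in> A i}
        = (\<integral>\<^sup>+y. ennreal (normal_density 0 s y) * indicator (A i) (y + \<delta> i) \<partial>lborel)"
      unfolding centered_normal_def
      by (subst emeasure_density) (auto intro!: nn_integral_cong simp: indicator_def)
    also have "\<dots> = (\<integral>\<^sup>+y. ennreal (normal_density (\<delta> i) s y) * indicator (A i) y \<partial>lborel)"
      by (rule nn_integral_normal_density_translate) simp
    also have "\<dots> = emeasure (?S i) (A i)"
      by (subst emeasure_density) auto
    finally show "emeasure (centered_normal s) {y. y + \<delta> i \<in> A i} = emeasure (?S i) (A i)" .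
  qed
  finally show "emeasure ?D (Pi\<^sub>E I A) = (\<Prod>i\<in>I. emeasure (?S i) (A i))" .
qed

lemma density_PiM_centered_normal_cameron_martin:
  "density (PiM I (\<lambda>_. centered_normal s)) (\<lambda>z. \<Prod>i\<in>I. ennreal (cameron_martin_weight s (\<delta> i) (z i)))
     = PiM I (\<lambda>i. density lborel (\<lambda>x. ennreal (normal_density (\<delta> i) s x)))"
    (is "?D = PiM I ?S")
proof (rule S.PiM_eqI[OF I])
  show "sets ?D = sets (PiM I ?S)"
    unfolding sets_density by (rule sets_PiM_cong) auto
  fix A assume "\<And>i. i \<in> I \<Longrightarrow> A i \<in> sets (?S i)"
  then have A [measurable]: "\<And>i. i \<in> I \<Longrightarrow> A i \<in> sets borel" by simp
  have "emeasure ?D (Pi\<^sub>E I A)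
      = (\<integral>\<^sup>+z. (\<Prod>i\<in>I. ennreal (cameron_martin_weight s (\<delta> i) (z i))) * indicator (Pi\<^sub>E I A) z
           \<partial>PiM I (\<lambda>_. centered_normal s))"
    using A I by (subst emeasure_density) (auto intro!: sets_PiM_I_finite)
  also have "\<dots> = (\<integral>\<^sup>+z. (\<Prod>i\<in>I. ennreal (cameron_martin_weight s (\<delta> i) (z i)) * indicator (A i) (z i))
           \<partial>PiM I (\<lambda>_. centered_normal s))"
    by (intro nn_integral_cong)
       (simp add: prod.distrib space_PiM prod_indicator_PiE[OF I] PiE_def)
  also have "\<dots> = (\<Prod>i\<in>I. \<integral>\<^sup>+y. ennreal (cameron_martin_weight s (\<delta> i) y) * indicator (A i) y \<partial>centered_normal s)"
    by (rule N.product_nn_integral_prod[OF I]) simp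
  also have "\<dots> = (\<Prod>i\<in>I. emeasure (?S i) (A i))"
    using A by (intro prod.cong refl)
       (simp add: nn_integral_centered_normal_cameron_martin_weight[OF s] emeasure_density)
  finally show "emeasure ?D (Pi\<^sub>E I A) = (\<Prod>i\<in>I. emeasure (?S i) (A i))" .
qed

lemma nn_integral_PiM_centered_normal_translate:
  assumes "G \<in> borel_measurable (PiM I (\<lambda>_. lborel))"
  shows "(\<integral>\<^sup>+z. G (\<lambda>i\<in>I. z i + \<delta> i) \<partial>PiM I (\<lambda>_. centered_normal s))
       = (\<integral>\<^sup>+z. (\<Prod>i\<in>I. ennreal (cameron_martin_weight s (\<delta> i) (z i))) * G z \<partial>PiM I (\<lambda>_. centered_normal s))"
proof -
  have sets_eq: "sets (PiM I (\<lambda>_. centered_normal s)) = sets (PiM I (\<lambda>_. lborel))"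
    by (rule sets_PiM_cong) auto
  have "G \<in> borel_measurable (PiM I (\<lambda>_. borel))"
    using assms measurable_cong_sets[OF sets_PiM_cong[OF refl sets_lborel] refl] by blast
  then have "(\<integral>\<^sup>+z. G (\<lambda>i\<in>I. z i + \<delta> i) \<partial>PiM I (\<lambda>_. centered_normal s))
     = (\<integral>\<^sup>+z. G z \<partial>distr (PiM I (\<lambda>_. centered_normal s)) (PiM I (\<lambda>_. lborel)) (\<lambda>z. \<lambda>i\<in>I. z i + \<delta> i))"
    by (subst nn_integral_distr[OF translate_PiM_measurable]) auto
  also have "\<dots> = (\<integral>\<^sup>+z. G z \<partial>density (PiM I (\<lambda>_. centered_normal s))
                       (\<lambda>z. \<Prod>i\<in>I. ennreal (cameron_martin_weight s (\<delta> i) (z i))))"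
    by (simp add: distr_PiM_centered_normal_translate density_PiM_centered_normal_cameron_martin)
  also have "\<dots> = (\<integral>\<^sup>+z. (\<Prod>i\<in>I. ennreal (cameron_martin_weight s (\<delta> i) (z i))) * G z \<partial>PiM I (\<lambda>_. centered_normal s))"
    using assms measurable_cong_sets[OF sets_eq refl] by (intro nn_integral_density) auto
  finally show ?thesis .
qed

lemma nn_integral_PiM_cameron_martin_weight_powr:
  "(\<integral>\<^sup>+z. (\<Prod>i\<in>I. ennreal (cameron_martin_weight s (\<delta> i) (z i) powr q)) \<partial>PiM I (\<lambda>_. centered_normal s))
     = ennreal (exp (q * (q - 1) * (\<Sum>i\<in>I. (\<delta> i)\<^sup>2) / (2 * s\<^sup>2)))"
proof -
  have "(\<integral>\<^sup>+z. (\<Prod>i\<in>I. ennreal (cameron_martin_weight s (\<delta> i) (z i) powr q)) \<partial>PiM I (\<lambda>_. centered_normal s))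
      = (\<Prod>i\<in>I. \<integral>\<^sup>+y. ennreal (cameron_martin_weight s (\<delta> i) y powr q) \<partial>centered_normal s)"
    by (rule N.product_nn_integral_prod[OF I]) simp
  also have "\<dots> = ennreal (\<Prod>i\<in>I. exp (q * (q - 1) * (\<delta> i)\<^sup>2 / (2 * s\<^sup>2)))"
    by (simp add: nn_integral_centered_normal_cameron_martin_weight_powr[OF s] prod_ennreal)
  also have "(\<Prod>i\<in>I. exp (q * (q - 1) * (\<delta> i)\<^sup>2 / (2 * s\<^sup>2))) = exp (q * (q - 1) * (\<Sum>i\<in>I. (\<delta> i)\<^sup>2) / (2 * s\<^sup>2))"
    by (simp add: exp_sum[symmetric] sum_divide_distrib sum_distrib_left I)
  finally show ?thesis .
qed

end

section \<open>Left Riemann sums\<close>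

lemma norm_integral_sub_left_rectangle_le:
  fixes \<phi> :: "real \<Rightarrow> 'b::banach"
  assumes "a \<le> b" and "continuous_on {a..b} \<phi>"
    and "\<And>x. x \<in> {a..b} \<Longrightarrow> norm (\<phi> x - \<phi> a) \<le> e"
  shows "norm (integral {a..b} \<phi> - (b - a) *\<^sub>R \<phi> a) \<le> e * (b - a)"
proof -
  have "integral {a..b} (\<lambda>x. \<phi> x - \<phi> a) = integral {a..b} \<phi> - (b - a) *\<^sub>R \<phi> a"
    using assms by (subst integral_diff) (auto intro: integrable_continuous_real)
  moreover have "norm (integral {a..b} (\<lambda>x. \<phi> x - \<phi> a)) \<le> e * (b - a)"
    using assms by (intro integral_bound) (auto intro!: continuous_intros)
  ultimately show ?thesis by simp
qed

lemma integral_uniform_grid_split: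
  fixes \<phi> :: "real \<Rightarrow> 'b::banach"
  assumes "h > 0" and "continuous_on {0..real n * h} \<phi>" and "m \<le> n"
  shows "integral {0..real m * h} \<phi> = (\<Sum>k<m. integral {real k * h..real (Suc k) * h} \<phi>)"
  using assms(3)
proof (induction m)
  case (Suc m)
  have "\<phi> integrable_on {0..real (Suc m) * h}"
    using Suc.prems assms(1)
    by (intro integrable_continuous_real continuous_on_subset[OF assms(2)])
       (auto intro: mult_right_mono)
  then have "integral {0..real (Suc m) * h} \<phi>
      = integral {0..real m * h} \<phi> + integral {real m * h..real (Suc m) * h} \<phi>"
    using assms(1)
    by (intro Henstock_Kurzweil_Integration.integral_combine[symmetric]) (auto intro: mult_right_mono)
  then show ?case using Suc by simp
qed simp

lemma norm_integral_grid_cell_sub_left_rectangle_le: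
  fixes \<phi> :: "real \<Rightarrow> 'b::banach"
  assumes c: "continuous_on {0..t} \<phi>"
    and modulus: "\<And>x y. x \<in> {0..t} \<Longrightarrow> y \<in> {0..t} \<Longrightarrow> dist y x < d \<Longrightarrow> dist (\<phi> y) (\<phi> x) < e"
    and h: "0 < h" "h < d" and k: "real (Suc k) * h \<le> t"
  shows "norm (integral {real k * h..real (Suc k) * h} \<phi> - h *\<^sub>R \<phi> (real k * h)) \<le> e * h"
proof -
  have sub: "{real k * h..real (Suc k) * h} \<subseteq> {0..t}" using h k by auto
  have close: "norm (\<phi> x - \<phi> (real k * h)) \<le> e" if "x \<in> {real k * h..real (Suc k) * h}" for x
  proof -
    have "real k * h \<in> {0..t}" "x \<in> {0..t}"
      using subsetD[OF sub, of "real k * h"] subsetD[OF sub that] h by auto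
    moreover have "dist x (real k * h) < d"
      using that h by (auto simp: dist_real_def algebra_simps)
    ultimately show ?thesis using modulus by (fastforce simp: dist_norm)
  qed
  have "norm (integral {real k * h..real (Suc k) * h} \<phi> - (real (Suc k) * h - real k * h) *\<^sub>R \<phi> (real k * h))
      \<le> e * (real (Suc k) * h - real k * h)"
    using h by (intro norm_integral_sub_left_rectangle_le continuous_on_subset[OF c sub] close) auto
  then show ?thesis by (simp add: algebra_simps)
qed

lemma left_riemann_sums_tendsto_integral:
  fixes \<phi> :: "real \<Rightarrow> 'b::banach"
  assumes t: "t > 0" and c: "continuous_on {0..t} \<phi>"
  shows "(\<lambda>n. (t / real n) *\<^sub>R (\<Sum>k<n. \<phi> (real k * t / real n))) \<longlonglongrightarrow> integral {0..t} \<phi>"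
proof (rule LIMSEQ_I)
  fix e :: real assume e: "e > 0"
  then obtain d where d: "d > 0"
    and dd: "\<And>x y. x \<in> {0..t} \<Longrightarrow> y \<in> {0..t} \<Longrightarrow> dist y x < d \<Longrightarrow> dist (\<phi> y) (\<phi> x) < e / (2 * t)"
    using compact_uniformly_continuous[OF c] t unfolding uniformly_continuous_on_def
    by (metis compact_Icc divide_pos_pos mult_pos_pos zero_less_numeral)
  obtain n\<^sub>0 :: nat where n\<^sub>0: "t / d < real n\<^sub>0" using reals_Archimedean2 by blast
  show "\<exists>n\<^sub>0. \<forall>n\<ge>n\<^sub>0. norm ((t / real n) *\<^sub>R (\<Sum>k<n. \<phi> (real k * t / real n)) - integral {0..t} \<phi>) < e"
  proof (intro exI allI impI)
    fix n assume n: "n \<ge> Suc n\<^sub>0"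
    define h where "h = t / real n"
    have h: "h > 0" and hn: "real n * h = t" using t n by (auto simp: h_def)
    have "t / d < real n" using n n\<^sub>0 by linarith
    then have "h < d" using d n by (simp add: h_def field_simps)
    have piece: "norm (integral {real k * h..real (Suc k) * h} \<phi> - h *\<^sub>R \<phi> (real k * h)) \<le> e / (2 * t) * h"
      if "k < n" for k
      using that h hn \<open>h < d\<close>
      by (intro norm_integral_grid_cell_sub_left_rectangle_le[OF c dd])
         (auto intro: mult_right_mono simp del: of_nat_Suc)
    have split: "integral {0..t} \<phi> = (\<Sum>k<n. integral {real k * h..real (Suc k) * h} \<phi>)"
      using integral_uniform_grid_split[of h n \<phi> n] c hn h by simp
    have "real k * t / real n = real k * h" for k by (simp add: h_def)
    then have "norm ((t / real n) *\<^sub>R (\<Sum>k<n. \<phi> (real k * t / real n)) - integral {0..t} \<phi>)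
        = norm (\<Sum>k<n. integral {real k * h..real (Suc k) * h} \<phi> - h *\<^sub>R \<phi> (real k * h))"
      by (simp add: split h_def[symmetric] scaleR_sum_right sum_subtractf norm_minus_commute)
    also have "\<dots> \<le> (\<Sum>k<n. e / (2 * t) * h)"
      by (intro order_trans[OF norm_sum] sum_mono piece) simp
    also have "\<dots> < e" using e t hn by (simp add: field_simps)
    finally show "norm ((t / real n) *\<^sub>R (\<Sum>k<n. \<phi> (real k * t / real n)) - integral {0..t} \<phi>) < e" .
  qed
qed

section \<open>Finite Borel measures are determined by continuous functions\<close>

lemma tendsto_integral_infdist_cutoff:
  fixes \<mu> :: "'a::metric_space measure"
  assumes "finite_measure \<mu>" and sets_\<mu>: "sets \<mu> = sets borel"
    and F: "closed F" "F \<noteq> {}"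
  shows "(\<lambda>k. \<integral>x. max 0 (1 - real k * infdist x F) \<partial>\<mu>) \<longlonglongrightarrow> measure \<mu> F"
proof -
  interpret finite_measure \<mu> by fact
  have pointwise: "(\<lambda>k. max 0 (1 - real k * infdist x F)) \<longlonglongrightarrow> indicator F x" for x
  proof (cases "x \<in> F")
    case True
    then show ?thesis using F in_closed_iff_infdist_zero by fastforce
  next
    case False
    then have "infdist x F > 0" using F infdist_pos_not_in_closed by blast
    then obtain k\<^sub>0 :: nat where "1 / infdist x F < real k\<^sub>0" using reals_Archimedean2 by blast
    then have "\<forall>\<^sub>F k in sequentially. max 0 (1 - real k * infdist x F) = 0"
      using \<open>infdist x F > 0\<close>
      by (intro eventually_sequentiallyI[of k\<^sub>0])
         (simp add: field_simps, smt (verit) mult_right_mono of_nat_mono)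
    then show ?thesis using False by (simp add: tendsto_eventually)
  qed
  have [measurable]: "F \<in> sets \<mu>" using F sets_\<mu> by (simp add: borel_closed)
  have "(\<lambda>k. \<integral>x. max 0 (1 - real k * infdist x F) \<partial>\<mu>) \<longlonglongrightarrow> (\<integral>x. indicator F x \<partial>\<mu>)"
    using sets_\<mu> pointwise
    by (intro integral_dominated_convergence[where w="\<lambda>_. 1"])
       (auto simp: measurable_cong_sets[OF sets_\<mu> refl] infdist_nonneg
             intro!: borel_measurable_continuous_onI continuous_intros)
  then show ?thesis by simp
qed

lemma finite_measure_eqI_continuous:
  fixes \<mu> \<nu> :: "'a::metric_space measure"
  assumes sets_\<mu>: "sets \<mu> = sets borel" and sets_\<nu>: "sets \<nu> = sets borel"
    and "finite_measure \<mu>" "finite_measure \<nu>"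
    and eq: "\<And>g::'a \<Rightarrow> real. continuous_on UNIV g \<Longrightarrow> (\<And>x. 0 \<le> g x) \<Longrightarrow> (\<And>x. g x \<le> 1) \<Longrightarrow>
              (\<integral>x. g x \<partial>\<mu>) = (\<integral>x. g x \<partial>\<nu>)"
  shows "\<mu> = \<nu>"
proof -
  interpret \<mu>: finite_measure \<mu> by fact
  interpret \<nu>: finite_measure \<nu> by fact
  have closed_eq: "emeasure \<mu> F = emeasure \<nu> F" if F: "closed F" for F
  proof (cases "F = {}")
    case False
    have "(\<integral>x. max 0 (1 - real k * infdist x F) \<partial>\<mu>) = (\<integral>x. max 0 (1 - real k * infdist x F) \<partial>\<nu>)" for k
      by (rule eq) (auto intro!: continuous_intros simp: infdist_nonneg)
    then have "measure \<mu> F = measure \<nu> F"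
      using tendsto_integral_infdist_cutoff[OF \<open>finite_measure \<mu>\<close> sets_\<mu> F False]
            tendsto_integral_infdist_cutoff[OF \<open>finite_measure \<nu>\<close> sets_\<nu> F False]
      by (simp add: LIMSEQ_unique)
    then show ?thesis
      using F sets_\<mu> sets_\<nu> by (simp add: \<mu>.emeasure_eq_measure \<nu>.emeasure_eq_measure)
  qed simp
  have "sets (borel :: 'a measure) = sigma_sets UNIV (Collect closed)"
    by (subst borel_eq_closed) (simp add: sets_measure_of)
  then show ?thesis
    using closed_eq sets_\<mu> sets_\<nu>
    by (intro measure_eqI_generator_eq[where E="Collect closed" and \<Omega>=UNIV and A="\<lambda>_. UNIV"])
       (auto simp: Int_stable_def)
qed

section \<open>Hoelder's inequality\<close>

lemma integral_mult_eq_0_if_integral_powr_eq_0: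
  fixes u v :: "'a \<Rightarrow> real"
  assumes "p > 0" and "\<And>x. 0 \<le> u x" and "integrable M (\<lambda>x. u x powr p)"
    and "(\<integral>x. u x powr p \<partial>M) = 0"
  shows "(\<integral>x. u x * v x \<partial>M) = 0"
proof -
  have "AE x in M. u x powr p = 0"
    using assms by (subst integral_nonneg_eq_0_iff_AE[symmetric]) auto
  then have "AE x in M. u x * v x = 0" by eventually_elim simp
  then show ?thesis by (simp add: integral_eq_zero_AE)
qed

lemma Holder_inequality_nonneg:
  fixes u v :: "'a \<Rightarrow> real"
  assumes \<alpha>: "1 < \<alpha>" and q: "q = \<alpha> / (\<alpha> - 1)"
    and [measurable]: "u \<in> borel_measurable M" "v \<in> borel_measurable M"
    and u0: "\<And>x. 0 \<le> u x" and v0: "\<And>x. 0 \<le> v x"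
    and iu: "integrable M (\<lambda>x. u x powr \<alpha>)" and iv: "integrable M (\<lambda>x. v x powr q)"
    and iuv: "integrable M (\<lambda>x. u x * v x)"
  shows "(\<integral>x. u x * v x \<partial>M) \<le> (\<integral>x. u x powr \<alpha> \<partial>M) powr (1/\<alpha>) * (\<integral>x. v x powr q \<partial>M) powr (1/q)"
proof -
  define A where "A = (\<integral>x. u x powr \<alpha> \<partial>M)"
  define C where "C = (\<integral>x. v x powr q \<partial>M)"
  have q1: "q > 1" and conj: "1/\<alpha> + 1/q = 1" using \<alpha> by (simp_all add: q field_simps)
  have "A \<ge> 0" "C \<ge> 0" unfolding A_def C_def by (auto intro!: integral_nonneg_AE)
  show ?thesis
  proof (cases "A = 0 \<or> C = 0")
    case True
    then have "(\<integral>x. u x * v x \<partial>M) = 0"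
      using integral_mult_eq_0_if_integral_powr_eq_0[of \<alpha> u M v]
            integral_mult_eq_0_if_integral_powr_eq_0[of q v M u] \<alpha> q1 u0 v0 iu iv
      by (auto simp: A_def C_def mult.commute)
    then show ?thesis by simp
  next
    case False
    define a where "a = A powr (1/\<alpha>)"
    define c where "c = C powr (1/q)"
    have a: "a > 0" and c: "c > 0" using False \<open>A \<ge> 0\<close> \<open>C \<ge> 0\<close> by (auto simp: a_def c_def)
    have "a powr \<alpha> = A" "c powr q = C"
      using \<open>A \<ge> 0\<close> \<open>C \<ge> 0\<close> \<alpha> q1 by (simp_all add: a_def c_def powr_powr)
    have young: "u x * v x / (a * c) \<le> u x powr \<alpha> / (\<alpha> * A) + v x powr q / (q * C)" for x
    proof -
      have "(u x / a) * (v x / c) \<le> (u x / a) powr \<alpha> / \<alpha> + (v x / c) powr q / q"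
        by (rule Youngs_inequality[OF \<alpha> q1 conj]) (use u0 v0 a c in auto)
      then show ?thesis
        using u0 v0 a c \<open>a powr \<alpha> = A\<close> \<open>c powr q = C\<close> by (simp add: powr_divide field_simps)
    qed
    have "(\<integral>x. u x * v x / (a * c) \<partial>M) \<le> (\<integral>x. u x powr \<alpha> / (\<alpha> * A) + v x powr q / (q * C) \<partial>M)"
      by (rule integral_mono) (use iuv iu iv young in auto)
    also have "\<dots> = 1"
      using iu iv False \<open>A \<ge> 0\<close> \<open>C \<ge> 0\<close> conj by (simp add: A_def[symmetric] C_def[symmetric] field_simps)
    finally show ?thesis using a c by (simp add: a_def c_def A_def C_def field_simps)
  qed
qed

lemma powr_integral_mult_le_Holder:
  fixes u v :: "'a \<Rightarrow> real"
  assumes "finite_measure M" and \<alpha>: "1 < \<alpha>" and q: "q = \<alpha> / (\<alpha> - 1)"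
    and [measurable]: "u \<in> borel_measurable M" "v \<in> borel_measurable M"
    and u: "\<And>x. 0 \<le> u x" "\<And>x. u x \<le> K" and v: "\<And>x. 0 \<le> v x"
    and "integrable M v" and "integrable M (\<lambda>x. v x powr q)"
  shows "(\<integral>x. u x * v x \<partial>M) powr \<alpha> \<le> (\<integral>x. u x powr \<alpha> \<partial>M) * (\<integral>x. v x powr q \<partial>M) powr (\<alpha> - 1)"
proof -
  interpret finite_measure M by fact
  have "K \<ge> 0" using u[of undefined] by linarith
  have "integrable M (\<lambda>x. u x powr \<alpha>)"
    using u \<alpha> by (intro integrable_const_bound[where B="K powr \<alpha>"]) (auto intro!: powr_mono2)
  moreover have "integrable M (\<lambda>x. u x * v x)"
    using u v \<open>K \<ge> 0\<close>
    by (intro Bochner_Integration.integrable_bound[OF integrable_mult_left[OF \<open>integrable M v\<close>, of K]])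
       (auto intro!: AE_I2 simp: mult.commute[of _ K] mult_right_mono)
  ultimately have Holder: "(\<integral>x. u x * v x \<partial>M)
      \<le> (\<integral>x. u x powr \<alpha> \<partial>M) powr (1/\<alpha>) * (\<integral>x. v x powr q \<partial>M) powr (1/q)"
    using assms by (intro Holder_inequality_nonneg) auto
  have "(\<integral>x. u x * v x \<partial>M) powr \<alpha>
      \<le> ((\<integral>x. u x powr \<alpha> \<partial>M) powr (1/\<alpha>) * (\<integral>x. v x powr q \<partial>M) powr (1/q)) powr \<alpha>"
    using Holder \<alpha> u v by (intro powr_mono2) (auto intro!: integral_nonneg_AE)
  also have "\<dots> = (\<integral>x. u x powr \<alpha> \<partial>M) powr (1/\<alpha> * \<alpha>) * (\<integral>x. v x powr q \<partial>M) powr (1/q * \<alpha>)"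
    using u v by (simp add: powr_mult powr_powr integral_nonneg_AE)
  also have "1/\<alpha> * \<alpha> = 1" using \<alpha> by simp
  also have "1/q * \<alpha> = \<alpha> - 1" using \<alpha> by (simp add: q)
  finally show ?thesis using u by (simp add: integral_nonneg_AE)
qed

section \<open>Brownian increments on a uniform grid\<close>

lemma vec_nth_borel_measurable [measurable]:
  "(\<lambda>v::real^'n::finite. v $ i) \<in> borel_measurable borel"
  by (intro borel_measurable_continuous_onI continuous_intros)

lemma vec_nth_measurable_comp [measurable (raw)]:
  "f \<in> borel_measurable M \<Longrightarrow> (\<lambda>x. (f x :: real^'n::finite) $ i) \<in> borel_measurable M"
  by (rule measurable_compose[OF _ vec_nth_borel_measurable])

lemma vec_lambda_borel_measurable [measurable (raw)]:
  fixes f :: "'n::finite \<Rightarrow> 'a \<Rightarrow> real"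
  assumes "\<And>i. f i \<in> borel_measurable M"
  shows "(\<lambda>x. \<chi> i. f i x) \<in> borel_measurable M"
proof (subst borel_measurable_euclidean_space, intro ballI)
  fix b :: "real ^ 'n" assume "b \<in> Basis"
  then obtain i where "b = axis i 1" by (auto simp: Basis_vec_def)
  then show "(\<lambda>x. (\<chi> i. f i x) \<bullet> b) \<in> borel_measurable M"
    using assms by (simp add: inner_axis)
qed

definition grid_increment :: "(real \<Rightarrow> 'a \<Rightarrow> real ^ 'n) \<Rightarrow> real \<Rightarrow> nat \<times> 'n \<Rightarrow> 'a \<Rightarrow> real" where
  "grid_increment B h x \<omega> = (B (real (Suc (fst x)) * h) \<omega> - B (real (fst x) * h) \<omega>) $ snd x"

context
  fixes M :: "'a measure" and \<sigma> :: real and B :: "real \<Rightarrow> 'a \<Rightarrow> real ^ 'n::finite"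
  assumes BM: "brownian_motion M \<sigma> B"
begin

lemma brownian_motion_prob_space: "prob_space M"
  using BM by (simp add: brownian_motion_def)

lemma brownian_motion_measurable: "s \<ge> 0 \<Longrightarrow> B s \<in> borel_measurable M"
  using BM by (simp add: brownian_motion_def)

lemma brownian_motion_start: "\<omega> \<in> space M \<Longrightarrow> B 0 \<omega> = 0"
  using BM by (simp add: brownian_motion_def)

lemma brownian_motion_continuous: "\<omega> \<in> space M \<Longrightarrow> continuous_on {0..} (\<lambda>t. B t \<omega>)"
  using BM by (simp add: brownian_motion_def)

lemma grid_increment_measurable: "h > 0 \<Longrightarrow> grid_increment B h x \<in> borel_measurable M"
  unfolding grid_increment_def
  by (intro vec_nth_measurable_comp borel_measurable_diff brownian_motion_measurable) auto

lemma grid_increments_indep_normal: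
  assumes "h > 0"
  shows "prob_space.indep_vars M (\<lambda>_. borel) (grid_increment B h) ({..<n} \<times> UNIV)"
    and "j < n \<Longrightarrow> distributed M lborel (grid_increment B h (j, i))
            (\<lambda>x. ennreal (normal_density 0 (\<sigma> * sqrt h) x))"
proof -
  define ts where "ts k = real k * h" for k :: nat
  have "0 \<le> ts 0 \<and> (\<forall>j<n. ts j < ts (Suc j))" using assms by (simp add: ts_def)
  then have "prob_space.indep_vars M (\<lambda>_. borel)
          (\<lambda>(j, i) \<omega>. (B (ts (Suc j)) \<omega> - B (ts j) \<omega>) $ i) ({..<n} \<times> UNIV) \<and>
        (\<forall>j<n. \<forall>i. distributed M lborel (\<lambda>\<omega>. (B (ts (Suc j)) \<omega> - B (ts j) \<omega>) $ i)
                 (\<lambda>x. ennreal (normal_density 0 (\<sigma> * sqrt (ts (Suc j) - ts j)) x)))"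
    using BM unfolding brownian_motion_def by blast
  moreover have "(\<lambda>(j, i) \<omega>. (B (ts (Suc j)) \<omega> - B (ts j) \<omega>) $ i) = grid_increment B h"
    by (auto simp: grid_increment_def ts_def fun_eq_iff)
  moreover have "ts (Suc j) - ts j = h" for j by (simp add: ts_def algebra_simps)
  ultimately show "prob_space.indep_vars M (\<lambda>_. borel) (grid_increment B h) ({..<n} \<times> UNIV)"
    and "j < n \<Longrightarrow> distributed M lborel (grid_increment B h (j, i))
            (\<lambda>x. ennreal (normal_density 0 (\<sigma> * sqrt h) x))"
    by (auto simp: grid_increment_def[abs_def] ts_def)
qed

lemma nn_integral_grid_increments:
  assumes h: "h > 0" and n: "n > 0"
    and G: "G \<in> borel_measurable (PiM ({..<n} \<times> UNIV) (\<lambda>_. lborel))"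
  shows "(\<integral>\<^sup>+\<omega>. G (\<lambda>x\<in>{..<n} \<times> UNIV. grid_increment B h x \<omega>) \<partial>M)
       = (\<integral>\<^sup>+z. G z \<partial>PiM ({..<n} \<times> UNIV) (\<lambda>_. centered_normal (\<sigma> * sqrt h)))"
proof -
  interpret prob_space M by (rule brownian_motion_prob_space)
  let ?I = "{..<n} \<times> (UNIV :: 'n set)"
  let ?X = "\<lambda>\<omega>. \<lambda>x\<in>?I. grid_increment B h x \<omega>"
  have rv: "\<And>x. random_variable borel (grid_increment B h x)"
    by (rule grid_increment_measurable[OF h])
  have "distr M (PiM ?I (\<lambda>_. borel)) ?X = PiM ?I (\<lambda>x. distr M borel (grid_increment B h x))"
    using n grid_increments_indep_normal(1)[OF h] rv
    by (intro indep_vars_iff_distr_eq_PiM[THEN iffD1]) auto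
  also have "\<dots> = PiM ?I (\<lambda>_. centered_normal (\<sigma> * sqrt h))"
  proof (rule PiM_cong[OF refl])
    fix x assume "x \<in> ?I"
    then have "distr M lborel (grid_increment B h x) = centered_normal (\<sigma> * sqrt h)"
      using grid_increments_indep_normal(2)[OF h, of "fst x" n "snd x"]
      by (cases x) (simp add: distributed_def centered_normal_def)
    moreover have "distr M borel (grid_increment B h x) = distr M lborel (grid_increment B h x)"
      by (rule distr_cong) auto
    ultimately show "distr M borel (grid_increment B h x) = centered_normal (\<sigma> * sqrt h)" by simp
  qed
  finally have law: "distr M (PiM ?I (\<lambda>_. borel)) ?X = PiM ?I (\<lambda>_. centered_normal (\<sigma> * sqrt h))" .
  have "G \<in> borel_measurable (PiM ?I (\<lambda>_. borel))"
    using G measurable_cong_sets[OF sets_PiM_cong[OF refl sets_lborel] refl] by blast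
  then have "(\<integral>\<^sup>+\<omega>. G (?X \<omega>) \<partial>M) = (\<integral>\<^sup>+z. G z \<partial>distr M (PiM ?I (\<lambda>_. borel)) ?X)"
    using rv by (subst nn_integral_distr) (auto intro!: measurable_restrict)
  then show ?thesis unfolding law .
qed

lemma nn_integral_grid_increments_translate:
  assumes \<sigma>: "\<sigma> > 0" and h: "h > 0" and n: "n > 0"
    and G: "G \<in> borel_measurable (PiM ({..<n} \<times> UNIV) (\<lambda>_. lborel))"
  shows "(\<integral>\<^sup>+\<omega>. G (\<lambda>x\<in>{..<n} \<times> UNIV. grid_increment B h x \<omega> + \<delta> x) \<partial>M)
       = (\<integral>\<^sup>+\<omega>. (\<Prod>x\<in>{..<n} \<times> UNIV. ennreal (cameron_martin_weight (\<sigma> * sqrt h) (\<delta> x) (grid_increment B h x \<omega>)))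
             * G (\<lambda>x\<in>{..<n} \<times> UNIV. grid_increment B h x \<omega>) \<partial>M)"
proof -
  let ?I = "{..<n} \<times> (UNIV :: 'n set)"
  let ?s = "\<sigma> * sqrt h"
  have s: "?s > 0" using h \<sigma> by simp
  have G_translate: "(\<lambda>z. G (\<lambda>x\<in>?I. z x + \<delta> x)) \<in> borel_measurable (PiM ?I (\<lambda>_. lborel))"
    by (rule measurable_compose[OF _ G], rule measurable_restrict) simp
  have G_weighted: "(\<lambda>z. (\<Prod>x\<in>?I. ennreal (cameron_martin_weight ?s (\<delta> x) (z x))) * G z)
      \<in> borel_measurable (PiM ?I (\<lambda>_. lborel))"
    using G by measurable
  have "(\<integral>\<^sup>+\<omega>. G (\<lambda>x\<in>?I. grid_increment B h x \<omega> + \<delta> x) \<partial>M)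
      = (\<integral>\<^sup>+\<omega>. (\<lambda>z. G (\<lambda>x\<in>?I. z x + \<delta> x)) (\<lambda>x\<in>?I. grid_increment B h x \<omega>) \<partial>M)"
    by (intro nn_integral_cong arg_cong[where f=G]) auto
  also have "\<dots> = (\<integral>\<^sup>+z. G (\<lambda>x\<in>?I. z x + \<delta> x) \<partial>PiM ?I (\<lambda>_. centered_normal ?s))"
    by (rule nn_integral_grid_increments[OF h n G_translate])
  also have "\<dots> = (\<integral>\<^sup>+z. (\<Prod>x\<in>?I. ennreal (cameron_martin_weight ?s (\<delta> x) (z x))) * G z
                     \<partial>PiM ?I (\<lambda>_. centered_normal ?s))"
    by (rule nn_integral_PiM_centered_normal_translate[OF _ s G]) simp
  also have "\<dots> = (\<integral>\<^sup>+\<omega>. (\<lambda>z. (\<Prod>x\<in>?I. ennreal (cameron_martin_weight ?s (\<delta> x) (z x))) * G z)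
                     (\<lambda>x\<in>?I. grid_increment B h x \<omega>) \<partial>M)"
    by (rule nn_integral_grid_increments[OF h n G_weighted, symmetric])
  also have "\<dots> = (\<integral>\<^sup>+\<omega>. (\<Prod>x\<in>?I. ennreal (cameron_martin_weight ?s (\<delta> x) (grid_increment B h x \<omega>)))
                     * G (\<lambda>x\<in>?I. grid_increment B h x \<omega>) \<partial>M)"
    by (intro nn_integral_cong arg_cong2[where f="(*)"] prod.cong) auto
  finally show ?thesis .
qed

lemma nn_integral_grid_cameron_martin_weight_powr:
  assumes \<sigma>: "\<sigma> > 0" and h: "h > 0" and n: "n > 0"
  shows "(\<integral>\<^sup>+\<omega>. (\<Prod>x\<in>{..<n} \<times> UNIV.
              ennreal (cameron_martin_weight (\<sigma> * sqrt h) (\<delta> x) (grid_increment B h x \<omega>) powr q)) \<partial>M)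
       = ennreal (exp (q * (q - 1) * (\<Sum>x\<in>{..<n} \<times> (UNIV::'n set). (\<delta> x)\<^sup>2) / (2 * (\<sigma> * sqrt h)\<^sup>2)))"
proof -
  let ?I = "{..<n} \<times> (UNIV :: 'n set)"
  let ?s = "\<sigma> * sqrt h"
  have "(\<lambda>z. (\<Prod>x\<in>?I. ennreal (cameron_martin_weight ?s (\<delta> x) (z x) powr q)))
      \<in> borel_measurable (PiM ?I (\<lambda>_. lborel))"
    by measurable
  from nn_integral_grid_increments[OF h n this]
  have "(\<integral>\<^sup>+\<omega>. (\<Prod>x\<in>?I. ennreal (cameron_martin_weight ?s (\<delta> x) (grid_increment B h x \<omega>) powr q)) \<partial>M)
      = (\<integral>\<^sup>+z. (\<Prod>x\<in>?I. ennreal (cameron_martin_weight ?s (\<delta> x) (z x) powr q)) \<partial>PiM ?I (\<lambda>_. centered_normal ?s))"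
    by (simp cong: prod.cong)
  also have "\<dots> = ennreal (exp (q * (q - 1) * (\<Sum>x\<in>?I. (\<delta> x)\<^sup>2) / (2 * ?s\<^sup>2)))"
    using h \<sigma> by (intro nn_integral_PiM_cameron_martin_weight_powr) auto
  finally show ?thesis .
qed

end

section \<open>Riemann sums of Brownian paths and step drifts\<close>

definition riemann_kolmogorov ::
  "(real \<Rightarrow> 'a \<Rightarrow> real ^ 'n) \<Rightarrow> real \<Rightarrow> nat \<Rightarrow> 'a \<Rightarrow> (real ^ 'n) \<times> (real ^ 'n)" where
  "riemann_kolmogorov B h n \<omega> = (B (real n * h) \<omega>, h *\<^sub>R (\<Sum>k<n. B (real k * h) \<omega>))"

definition kolmogorov_pair ::
  "(real \<Rightarrow> 'a \<Rightarrow> real ^ 'n) \<Rightarrow> real \<Rightarrow> 'a \<Rightarrow> (real ^ 'n) \<times> (real ^ 'n)" where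
  "kolmogorov_pair B t \<omega> = (B t \<omega>, integral {0..t} (\<lambda>s. B s \<omega>))"

definition riemann_of_increments ::
  "real \<Rightarrow> nat \<Rightarrow> (nat \<times> 'n::finite \<Rightarrow> real) \<Rightarrow> (real ^ 'n) \<times> (real ^ 'n)" where
  "riemann_of_increments h n z = ((\<chi> i. \<Sum>k<n. z (k, i)), (\<chi> i. h * (\<Sum>k<n. \<Sum>l<k. z (l, i))))"

text \<open>A step drift has velocity v j on the j-th of N blocks of length \<tau>. On the grid of
  mesh h = \<tau> / K each block consists of K cells; these are the drift's increments over
  the cells, its Girsanov density, and the shift it causes in (B t, integral of B), t = N \<tau>.\<close>
definition step_drift_increments :: "real \<Rightarrow> nat \<Rightarrow> (nat \<Rightarrow> real ^ 'n) \<Rightarrow> nat \<times> 'n \<Rightarrow> real" where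
  "step_drift_increments h K v x = h * (v (fst x div K) $ snd x)"

definition girsanov_density ::
  "(real \<Rightarrow> 'a \<Rightarrow> real ^ 'n::finite) \<Rightarrow> real \<Rightarrow> real \<Rightarrow> nat \<Rightarrow> (nat \<Rightarrow> real ^ 'n) \<Rightarrow> 'a \<Rightarrow> real" where
  "girsanov_density B \<sigma> \<tau> N v \<omega> =
     exp (\<Sum>j<N. \<Sum>i\<in>UNIV. grid_increment B \<tau> (j, i) \<omega> * (v j $ i) / \<sigma>\<^sup>2 - \<tau> * (v j $ i)\<^sup>2 / (2 * \<sigma>\<^sup>2))"

definition drift_shift :: "real \<Rightarrow> nat \<Rightarrow> (nat \<Rightarrow> real ^ 'n::finite) \<Rightarrow> (real ^ 'n) \<times> (real ^ 'n)" where
  "drift_shift \<tau> N v =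
     ((\<chi> i. \<tau> * (\<Sum>j<N. v j $ i)), (\<chi> i. \<tau>\<^sup>2 * (\<Sum>j<N. (real N - real j - 1/2) * v j $ i)))"

lemma girsanov_density_nonneg: "0 \<le> girsanov_density B \<sigma> \<tau> N v \<omega>"
  by (simp add: girsanov_density_def)

lemma riemann_of_increments_add:
  "riemann_of_increments h n (\<lambda>x\<in>{..<n} \<times> UNIV. z x + d x)
     = riemann_of_increments h n z + riemann_of_increments h n d"
  by (simp add: riemann_of_increments_def vec_eq_iff sum.distrib algebra_simps)

lemma riemann_of_increments_restrict:
  "riemann_of_increments h n (\<lambda>x\<in>{..<n} \<times> UNIV. z x) = riemann_of_increments h n z"
  by (simp add: riemann_of_increments_def)

lemma riemann_of_increments_measurable:
  "riemann_of_increments h n \<in> borel_measurable (PiM ({..<n} \<times> (UNIV :: 'n::finite set)) (\<lambda>_. lborel))"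
proof -
  have "(\<lambda>z. z (k, i)) \<in> borel_measurable (PiM ({..<n} \<times> (UNIV :: 'n set)) (\<lambda>_. lborel))"
    if "k < n" for k i
    using measurable_component_singleton[of "(k, i)" "{..<n} \<times> (UNIV :: 'n set)" "\<lambda>_. lborel"] that
          measurable_cong_sets[OF refl sets_lborel]
    by auto
  then show ?thesis
    unfolding riemann_of_increments_def
    by (intro borel_measurable_Pair vec_lambda_borel_measurable borel_measurable_sum
          borel_measurable_times borel_measurable_const) auto
qed

lemma sum_grid_increment:
  assumes "B 0 \<omega> = 0"
  shows "(\<Sum>l<k. grid_increment B h (l, i) \<omega>) = B (real k * h) \<omega> $ i"
  by (induction k) (simp_all add: assms grid_increment_def)

lemma riemann_of_grid_increments:
  fixes B :: "real \<Rightarrow> 'a \<Rightarrow> real ^ 'n::finite"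
  assumes "B 0 \<omega> = 0"
  shows "riemann_of_increments h n (\<lambda>x. grid_increment B h x \<omega>) = riemann_kolmogorov B h n \<omega>"
  by (simp add: riemann_of_increments_def riemann_kolmogorov_def vec_eq_iff sum_distrib_left
                sum_grid_increment[where B=B, OF assms])

lemma sum_grid_increment_block:
  assumes "K > 0" and h: "h = \<tau> / real K"
  shows "(\<Sum>k\<in>{j * K..<j * K + K}. grid_increment B h (k, i) \<omega>) = grid_increment B \<tau> (j, i) \<omega>"
proof -
  have "(\<Sum>k\<in>{j * K..<j * K + K}. grid_increment B h (k, i) \<omega>)
      = (\<Sum>k\<in>{j * K..<j * K + K}. B (real (Suc k) * h) \<omega> $ i - B (real k * h) \<omega> $ i)"
    by (simp add: grid_increment_def)
  also have "\<dots> = B (real (j * K + K) * h) \<omega> $ i - B (real (j * K) * h) \<omega> $ i"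
    by (rule sum_Suc_diff'[where f="\<lambda>k. B (real k * h) \<omega> $ i"]) simp
  also have "real (j * K + K) * h = real (Suc j) * \<tau>" using assms by (simp add: field_simps)
  also have "real (j * K) * h = real j * \<tau>" using assms by (simp add: field_simps)
  finally show ?thesis by (simp add: grid_increment_def)
qed

lemma sum_lessThan_mult_blocks:
  fixes F :: "nat \<Rightarrow> nat \<Rightarrow> 'b::comm_monoid_add"
  assumes "K > 0"
  shows "(\<Sum>k<N * K. F (k div K) k) = (\<Sum>j<N. \<Sum>k\<in>{j * K..<j * K + K}. F j k)"
proof -
  have "(\<Sum>k<N * K. F (k div K) k) = (\<Sum>j<N. \<Sum>k\<in>{j * K..<j * K + K}. F (k div K) k)"
    by (rule sum.nat_group[symmetric])
  also have "\<dots> = (\<Sum>j<N. \<Sum>k\<in>{j * K..<j * K + K}. F j k)"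
  proof (intro sum.cong refl)
    fix j k assume "k \<in> {j * K..<j * K + K}"
    then have "k div K = j" using assms by (auto intro!: div_nat_eqI simp: algebra_simps)
    then show "F (k div K) k = F j k" by simp
  qed
  finally show ?thesis .
qed

lemma cameron_martin_weight_scaled:
  assumes "h > 0" "\<sigma> > 0"
  shows "cameron_martin_weight (\<sigma> * sqrt h) (h * w) y = exp (y * w / \<sigma>\<^sup>2 - h * w\<^sup>2 / (2 * \<sigma>\<^sup>2))"
  using assms unfolding cameron_martin_weight_def
  by (simp add: power_mult_distrib field_simps power2_eq_square)

lemma prod_cameron_martin_weight_step_drift:
  assumes K: "K > 0" and h: "h = \<tau> / real K" and "\<tau> > 0" "\<sigma> > 0"
  shows "(\<Prod>x\<in>{..<N * K} \<times> UNIV. cameron_martin_weight (\<sigma> * sqrt h) (step_drift_increments h K v x)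
            (grid_increment B h x \<omega>))
       = girsanov_density B \<sigma> \<tau> N v \<omega>"
proof -
  have "h > 0" using assms by simp
  let ?e = "\<lambda>y w. y * w / \<sigma>\<^sup>2 - h * w\<^sup>2 / (2 * \<sigma>\<^sup>2)"
  have "(\<Prod>x\<in>{..<N * K} \<times> UNIV. cameron_martin_weight (\<sigma> * sqrt h) (step_drift_increments h K v x)
            (grid_increment B h x \<omega>))
      = exp (\<Sum>x\<in>{..<N * K} \<times> UNIV. ?e (grid_increment B h x \<omega>) (v (fst x div K) $ snd x))"
    by (simp add: step_drift_increments_def cameron_martin_weight_scaled[OF \<open>h > 0\<close> \<open>\<sigma> > 0\<close>] exp_sum)
  also have "(\<Sum>x\<in>{..<N * K} \<times> UNIV. ?e (grid_increment B h x \<omega>) (v (fst x div K) $ snd x))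
      = (\<Sum>k<N * K. \<Sum>i\<in>UNIV. ?e (grid_increment B h (k, i) \<omega>) (v (k div K) $ i))"
    by (simp add: sum.cartesian_product case_prod_beta)
  also have "\<dots> = (\<Sum>j<N. \<Sum>k\<in>{j * K..<j * K + K}. \<Sum>i\<in>UNIV. ?e (grid_increment B h (k, i) \<omega>) (v j $ i))"
    by (rule sum_lessThan_mult_blocks[OF K])
  also have "\<dots> = (\<Sum>j<N. \<Sum>i\<in>UNIV.
        (\<Sum>k\<in>{j * K..<j * K + K}. grid_increment B h (k, i) \<omega>) * (v j $ i) / \<sigma>\<^sup>2 - real K * (h * (v j $ i)\<^sup>2) / (2 * \<sigma>\<^sup>2))"
    by (subst sum.swap) (simp add: sum_subtractf sum_distrib_right sum_divide_distrib)
  also have "\<dots> = (\<Sum>j<N. \<Sum>i\<in>UNIV. grid_increment B \<tau> (j, i) \<omega> * (v j $ i) / \<sigma>\<^sup>2 - \<tau> * (v j $ i)\<^sup>2 / (2 * \<sigma>\<^sup>2))"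
    using K by (simp only: sum_grid_increment_block[OF K h]) (simp add: h)
  finally show ?thesis unfolding girsanov_density_def .
qed

lemma sum_lessThan_partial_sums:
  fixes a :: "nat \<Rightarrow> real"
  shows "(\<Sum>k<n. \<Sum>l<k. a l) = (\<Sum>l<n. (real n - real l - 1) * a l)"
  by (induction n) (simp_all add: sum.distrib[symmetric] algebra_simps)

lemma sum_of_nat_lessThan: "(\<Sum>r<K. real r) = real K * (real K - 1) / 2"
  by (induction K) (simp_all add: field_simps)

lemma sum_block_affine:
  "(\<Sum>k\<in>{m..<m + K}. c - real k) = real K * (c - real m) - real K * (real K - 1) / 2"
proof -
  have "(\<Sum>k\<in>{m..<m + K}. c - real k) = (\<Sum>r<K. (c - real m) - real r)"
    by (rule sum.reindex_bij_witness[where i="\<lambda>r. r + m" and j="\<lambda>k. k - m"]) auto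
  then show ?thesis by (simp add: sum_subtractf sum_of_nat_lessThan)
qed

lemma riemann_of_step_drift_increments:
  assumes K: "K > 0" and h: "h = \<tau> / real K"
  shows "riemann_of_increments h (N * K) (step_drift_increments h K v)
       = drift_shift \<tau> N v - (0, \<chi> i. \<tau>\<^sup>2 / (2 * real K) * (\<Sum>j<N. v j $ i))"
proof -
  have endpoint: "(\<Sum>k<N * K. step_drift_increments h K v (k, i)) = \<tau> * (\<Sum>j<N. v j $ i)" for i
  proof -
    have "(\<Sum>k<N * K. step_drift_increments h K v (k, i)) = (\<Sum>j<N. \<Sum>k\<in>{j * K..<j * K + K}. h * v j $ i)"
      unfolding step_drift_increments_def
      using sum_lessThan_mult_blocks[OF K, where F="\<lambda>j k. h * v j $ i"] by simp
    then show ?thesis using K by (simp add: h sum_distrib_left)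
  qed
  have area: "h * (\<Sum>k<N * K. \<Sum>l<k. step_drift_increments h K v (l, i))
      = \<tau>\<^sup>2 * (\<Sum>j<N. (real N - real j - 1/2) * v j $ i) - \<tau>\<^sup>2 / (2 * real K) * (\<Sum>j<N. v j $ i)" for i
  proof -
    have "(\<Sum>k<N * K. \<Sum>l<k. step_drift_increments h K v (l, i))
        = (\<Sum>j<N. \<Sum>k\<in>{j * K..<j * K + K}. (real (N * K) - real k - 1) * (h * v j $ i))"
      unfolding sum_lessThan_partial_sums step_drift_increments_def
      using sum_lessThan_mult_blocks[OF K, where F="\<lambda>j k. (real (N * K) - real k - 1) * (h * v j $ i)"]
      by simp
    also have "\<dots> = (\<Sum>j<N. h * v j $ i * (\<Sum>k\<in>{j * K..<j * K + K}. real (N * K) - 1 - real k))"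
      by (simp add: sum_distrib_left algebra_simps)
    also have "\<dots> = (\<Sum>j<N. h * v j $ i * (real K * (real (N * K) - 1 - real (j * K)) - real K * (real K - 1) / 2))"
      by (simp only: sum_block_affine)
    finally have eq: "(\<Sum>k<N * K. \<Sum>l<k. step_drift_increments h K v (l, i))
        = (\<Sum>j<N. h * v j $ i * (real K * (real (N * K) - 1 - real (j * K)) - real K * (real K - 1) / 2))" .
    have "h * (h * v j $ i * (real K * (real (N * K) - 1 - real (j * K)) - real K * (real K - 1) / 2))
        = \<tau>\<^sup>2 * ((real N - real j - 1/2) * v j $ i) - \<tau>\<^sup>2 / (2 * real K) * v j $ i" for j
      using K by (simp add: h field_simps power2_eq_square)
    then show ?thesis
      unfolding eq by (simp add: sum_distrib_left sum_subtractf)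
  qed
  show ?thesis
    by (simp add: riemann_of_increments_def drift_shift_def vec_eq_iff endpoint area)
qed

lemma riemann_of_step_drift_increments_tendsto:
  fixes v :: "nat \<Rightarrow> real ^ 'n::finite"
  shows "(\<lambda>k. riemann_of_increments (\<tau> / real (Suc k)) (N * Suc k) (step_drift_increments (\<tau> / real (Suc k)) (Suc k) v))
     \<longlonglongrightarrow> drift_shift \<tau> N v"
proof -
  define w :: "(real ^ 'n) \<times> (real ^ 'n)" where "w = (0, \<chi> i. \<tau>\<^sup>2 / 2 * (\<Sum>j<N. v j $ i))"
  have "riemann_of_increments (\<tau> / real (Suc k)) (N * Suc k) (step_drift_increments (\<tau> / real (Suc k)) (Suc k) v)
      = drift_shift \<tau> N v - (1 / real (Suc k)) *\<^sub>R w" for k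
    by (subst riemann_of_step_drift_increments[OF zero_less_Suc refl]) (simp add: w_def vec_eq_iff)
  moreover have "(\<lambda>k. drift_shift \<tau> N v - (1 / real (Suc k)) *\<^sub>R w) \<longlonglongrightarrow> drift_shift \<tau> N v - 0 *\<^sub>R w"
    by (intro tendsto_intros LIMSEQ_Suc[OF lim_1_over_n])
  ultimately show ?thesis by simp
qed

section \<open>Girsanov's formula for step drifts\<close>

context
  fixes M :: "'a measure" and \<sigma> :: real and B :: "real \<Rightarrow> 'a \<Rightarrow> real ^ 'n::finite"
  assumes BM: "brownian_motion M \<sigma> B" and \<sigma>: "\<sigma> > 0"
begin

interpretation prob_space M
  by (rule brownian_motion_prob_space[OF BM])

lemma riemann_kolmogorov_measurable [measurable]:
  "h > 0 \<Longrightarrow> riemann_kolmogorov B h n \<in> borel_measurable M"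
  unfolding riemann_kolmogorov_def
  by (intro borel_measurable_Pair borel_measurable_scaleR borel_measurable_const borel_measurable_sum
        brownian_motion_measurable[OF BM]) auto

lemma girsanov_density_measurable [measurable]:
  "\<tau> > 0 \<Longrightarrow> girsanov_density B \<sigma> \<tau> N v \<in> borel_measurable M"
  unfolding girsanov_density_def using grid_increment_measurable[OF BM] by measurable

lemma nn_integral_girsanov_density_powr:
  assumes "N > 0" and "\<tau> > 0"
  shows "(\<integral>\<^sup>+\<omega>. ennreal (girsanov_density B \<sigma> \<tau> N v \<omega> powr q) \<partial>M)
       = ennreal (exp (q * (q - 1) * \<tau> * (\<Sum>j<N. \<Sum>i\<in>UNIV. (v j $ i)\<^sup>2) / (2 * \<sigma>\<^sup>2)))"
proof -
  let ?I = "{..<N} \<times> (UNIV :: 'n set)"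
  let ?w = "\<lambda>x \<omega>. cameron_martin_weight (\<sigma> * sqrt \<tau>) (step_drift_increments \<tau> 1 v x) (grid_increment B \<tau> x \<omega>)"
  have "girsanov_density B \<sigma> \<tau> N v \<omega> powr q = (\<Prod>x\<in>?I. ?w x \<omega> powr q)" for \<omega>
    using assms \<sigma>
    by (simp add: prod_cameron_martin_weight_step_drift[where K=1 and B=B, symmetric] prod_powr_distrib less_imp_le)
  then have "(\<integral>\<^sup>+\<omega>. ennreal (girsanov_density B \<sigma> \<tau> N v \<omega> powr q) \<partial>M)
      = (\<integral>\<^sup>+\<omega>. (\<Prod>x\<in>?I. ennreal (?w x \<omega> powr q)) \<partial>M)"
    by (simp add: prod_ennreal)
  also have "\<dots> = ennreal (exp (q * (q - 1) * (\<Sum>x\<in>?I. (step_drift_increments \<tau> 1 v x)\<^sup>2) / (2 * (\<sigma> * sqrt \<tau>)\<^sup>2)))"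
    by (rule nn_integral_grid_cameron_martin_weight_powr[OF BM \<sigma> assms(2,1)])
  also have "q * (q - 1) * (\<Sum>x\<in>?I. (step_drift_increments \<tau> 1 v x)\<^sup>2) / (2 * (\<sigma> * sqrt \<tau>)\<^sup>2)
      = q * (q - 1) * \<tau> * (\<Sum>j<N. \<Sum>i\<in>UNIV. (v j $ i)\<^sup>2) / (2 * \<sigma>\<^sup>2)"
  proof -
    have "(\<Sum>x\<in>?I. (step_drift_increments \<tau> 1 v x)\<^sup>2) = \<tau>\<^sup>2 * (\<Sum>j<N. \<Sum>i\<in>UNIV. (v j $ i)\<^sup>2)"
      by (simp add: step_drift_increments_def sum.cartesian_product case_prod_beta power_mult_distrib
                    sum_distrib_left)
    moreover have "(\<sigma> * sqrt \<tau>)\<^sup>2 = \<sigma>\<^sup>2 * \<tau>" using assms by (simp add: power_mult_distrib)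
    ultimately show ?thesis using assms \<sigma> by (simp add: field_simps power2_eq_square)
  qed
  finally show ?thesis .
qed

lemma integrable_girsanov_density:
  assumes "N > 0" and "\<tau> > 0"
  shows "integrable M (girsanov_density B \<sigma> \<tau> N v)"
    and "(\<integral>\<^sup>+\<omega>. ennreal (girsanov_density B \<sigma> \<tau> N v \<omega>) \<partial>M) = 1"
proof -
  show one: "(\<integral>\<^sup>+\<omega>. ennreal (girsanov_density B \<sigma> \<tau> N v \<omega>) \<partial>M) = 1"
    using nn_integral_girsanov_density_powr[OF assms, of v 1]
    by (simp add: girsanov_density_def)
  show "integrable M (girsanov_density B \<sigma> \<tau> N v)"
    using assms one by (intro integrableI_nonneg) (auto simp: girsanov_density_nonneg)
qed

lemma nn_integral_riemann_kolmogorov_step_drift: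
  assumes K: "K > 0" and N: "N > 0" and \<tau>: "\<tau> > 0" and h: "h = \<tau> / real K"
    and g [measurable]: "g \<in> borel_measurable borel"
  shows "(\<integral>\<^sup>+\<omega>. g (riemann_kolmogorov B h (N * K) \<omega> + riemann_of_increments h (N * K) (step_drift_increments h K v)) \<partial>M)
       = (\<integral>\<^sup>+\<omega>. ennreal (girsanov_density B \<sigma> \<tau> N v \<omega>) * g (riemann_kolmogorov B h (N * K) \<omega>) \<partial>M)"
proof -
  let ?I = "{..<N * K} \<times> (UNIV :: 'n set)" and ?\<delta> = "step_drift_increments h K v"
  let ?\<rho> = "\<lambda>\<omega>. \<Prod>x\<in>?I. ennreal (cameron_martin_weight (\<sigma> * sqrt h) (?\<delta> x) (grid_increment B h x \<omega>))"
  have "h > 0" "N * K > 0" using assms by auto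
  have G: "(\<lambda>z. g (riemann_of_increments h (N * K) z)) \<in> borel_measurable (PiM ?I (\<lambda>_. lborel))"
    by (rule measurable_compose[OF riemann_of_increments_measurable g])
  have "(\<integral>\<^sup>+\<omega>. g (riemann_kolmogorov B h (N * K) \<omega> + riemann_of_increments h (N * K) ?\<delta>) \<partial>M)
      = (\<integral>\<^sup>+\<omega>. g (riemann_of_increments h (N * K) (\<lambda>x\<in>?I. grid_increment B h x \<omega> + ?\<delta> x)) \<partial>M)"
    by (intro nn_integral_cong)
       (simp add: riemann_of_increments_add riemann_of_grid_increments brownian_motion_start[OF BM])
  also have "\<dots> = (\<integral>\<^sup>+\<omega>. ?\<rho> \<omega> * g (riemann_of_increments h (N * K) (\<lambda>x\<in>?I. grid_increment B h x \<omega>)) \<partial>M)"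
    by (rule nn_integral_grid_increments_translate[OF BM \<sigma> \<open>h > 0\<close> \<open>N * K > 0\<close> G])
  also have "\<dots> = (\<integral>\<^sup>+\<omega>. ennreal (girsanov_density B \<sigma> \<tau> N v \<omega>) * g (riemann_kolmogorov B h (N * K) \<omega>) \<partial>M)"
    using prod_cameron_martin_weight_step_drift[OF K h \<tau> \<sigma>, where B=B]
    by (intro nn_integral_cong)
       (simp add: riemann_of_increments_restrict riemann_of_grid_increments brownian_motion_start[OF BM]
                  prod_ennreal less_imp_le)
  finally show ?thesis .
qed

lemma integral_riemann_kolmogorov_step_drift:
  assumes K: "K > 0" and N: "N > 0" and \<tau>: "\<tau> > 0" and h: "h = \<tau> / real K"
    and [measurable]: "g \<in> borel_measurable borel" and g: "\<And>x. 0 \<le> g x"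
  shows "(\<integral>\<omega>. g (riemann_kolmogorov B h (N * K) \<omega> + riemann_of_increments h (N * K) (step_drift_increments h K v)) \<partial>M)
       = (\<integral>\<omega>. girsanov_density B \<sigma> \<tau> N v \<omega> * g (riemann_kolmogorov B h (N * K) \<omega>) \<partial>M)"
proof -
  let ?X = "riemann_kolmogorov B h (N * K)" and ?L = "riemann_of_increments h (N * K) (step_drift_increments h K v)"
  have [measurable]: "?X \<in> borel_measurable M" using K \<tau> h by (intro riemann_kolmogorov_measurable) simp
  have [measurable]: "girsanov_density B \<sigma> \<tau> N v \<in> borel_measurable M"
    using \<tau> by (rule girsanov_density_measurable)
  have "(\<integral>\<omega>. g (?X \<omega> + ?L) \<partial>M) = enn2real (\<integral>\<^sup>+\<omega>. ennreal (g (?X \<omega> + ?L)) \<partial>M)"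
    using g by (intro integral_eq_nn_integral) auto
  also have "\<dots> = enn2real (\<integral>\<^sup>+\<omega>. ennreal (girsanov_density B \<sigma> \<tau> N v \<omega>) * ennreal (g (?X \<omega>)) \<partial>M)"
    by (subst nn_integral_riemann_kolmogorov_step_drift[OF K N \<tau> h]) simp_all
  also have "\<dots> = enn2real (\<integral>\<^sup>+\<omega>. ennreal (girsanov_density B \<sigma> \<tau> N v \<omega> * g (?X \<omega>)) \<partial>M)"
    by (simp add: ennreal_mult' girsanov_density_nonneg)
  also have "\<dots> = (\<integral>\<omega>. girsanov_density B \<sigma> \<tau> N v \<omega> * g (?X \<omega>) \<partial>M)"
    using g by (intro integral_eq_nn_integral[symmetric]) (auto simp: girsanov_density_nonneg)
  finally show ?thesis .
qed

context
  fixes t :: real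
  assumes t: "t > 0"
begin

lemma riemann_kolmogorov_tendsto:
  assumes N: "N > 0" and \<omega>: "\<omega> \<in> space M"
  shows "(\<lambda>k. riemann_kolmogorov B (t / real N / real (Suc k)) (N * Suc k) \<omega>) \<longlonglongrightarrow> kolmogorov_pair B t \<omega>"
proof -
  define R where "R m = (t / real m) *\<^sub>R (\<Sum>k<m. B (real k * t / real m) \<omega>)" for m
  have "continuous_on {0..t} (\<lambda>s. B s \<omega>)"
    by (rule continuous_on_subset[OF brownian_motion_continuous[OF BM \<omega>]]) auto
  then have "R \<longlonglongrightarrow> integral {0..t} (\<lambda>s. B s \<omega>)"
    unfolding R_def by (rule left_riemann_sums_tendsto_integral[OF t])
  moreover have "strict_mono (\<lambda>k. N * Suc k)"
    using N by (simp add: strict_mono_Suc_iff)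
  ultimately have "(\<lambda>k. R (N * Suc k)) \<longlonglongrightarrow> integral {0..t} (\<lambda>s. B s \<omega>)"
    using LIMSEQ_subseq_LIMSEQ by (auto simp: o_def)
  moreover have "riemann_kolmogorov B (t / real N / real (Suc k)) (N * Suc k) \<omega> = (B t \<omega>, R (N * Suc k))" for k
  proof -
    have e: "t / real N / real (Suc k) = t / real (N * Suc k)"
      unfolding of_nat_mult by (simp add: divide_divide_eq_left)
    have eq0: "riemann_kolmogorov B (t / real n) n \<omega> = (B t \<omega>, R n)" if "n > 0" for n
      using that by (simp add: riemann_kolmogorov_def R_def)
    show ?thesis unfolding e by (rule eq0) (use N in simp)
  qed
  ultimately show ?thesis
    unfolding kolmogorov_pair_def by (simp add: tendsto_Pair del: mult_Suc_right)
qed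

lemma kolmogorov_pair_measurable [measurable]: "kolmogorov_pair B t \<in> borel_measurable M"
proof (rule borel_measurable_LIMSEQ_metric)
  show "(\<lambda>k. riemann_kolmogorov B (t / real 1 / real (Suc k)) (1 * Suc k) \<omega>) \<longlonglongrightarrow> kolmogorov_pair B t \<omega>"
    if "\<omega> \<in> space M" for \<omega>
    by (rule riemann_kolmogorov_tendsto[OF _ that]) simp
qed (use t in simp)

lemma integral_kolmogorov_pair_translate_continuous:
  assumes N: "N > 0" and g: "continuous_on UNIV g" "\<And>x. 0 \<le> g x" "\<And>x. g x \<le> 1"
  shows "(\<integral>\<omega>. g (kolmogorov_pair B t \<omega> + drift_shift (t / real N) N v) \<partial>M)
       = (\<integral>\<omega>. girsanov_density B \<sigma> (t / real N) N v \<omega> * g (kolmogorov_pair B t \<omega>) \<partial>M)"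
proof -
  let ?\<tau> = "t / real N"
  let ?\<rho> = "girsanov_density B \<sigma> ?\<tau> N v"
  let ?X = "\<lambda>k. riemann_kolmogorov B (?\<tau> / real (Suc k)) (N * Suc k)"
  let ?L = "\<lambda>k. riemann_of_increments (?\<tau> / real (Suc k)) (N * Suc k) (step_drift_increments (?\<tau> / real (Suc k)) (Suc k) v)"
  have \<tau>: "?\<tau> > 0" using t N by simp
  have [measurable]: "g \<in> borel_measurable borel" by (rule borel_measurable_continuous_onI[OF g(1)])
  have [measurable]: "?X k \<in> borel_measurable M" for k
    using t N by (intro riemann_kolmogorov_measurable) simp
  have [measurable]: "?\<rho> \<in> borel_measurable M" using \<tau> by (rule girsanov_density_measurable)
  have g_cont: "isCont g x" for x using g(1) continuous_on_eq_continuous_at[of UNIV g] by blast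
  have X_lim: "(\<lambda>k. ?X k \<omega>) \<longlonglongrightarrow> kolmogorov_pair B t \<omega>" if "\<omega> \<in> space M" for \<omega>
    using riemann_kolmogorov_tendsto[OF N that] by simp
  have discrete: "(\<integral>\<omega>. g (?X k \<omega> + ?L k) \<partial>M) = (\<integral>\<omega>. ?\<rho> \<omega> * g (?X k \<omega>) \<partial>M)" for k
    using g(2) by (intro integral_riemann_kolmogorov_step_drift[OF zero_less_Suc N \<tau>]) auto
  have "(\<lambda>k. \<integral>\<omega>. g (?X k \<omega> + ?L k) \<partial>M) \<longlonglongrightarrow> (\<integral>\<omega>. g (kolmogorov_pair B t \<omega> + drift_shift ?\<tau> N v) \<partial>M)"
  proof (rule integral_dominated_convergence[where w="\<lambda>_. 1"])
    show "AE \<omega> in M. (\<lambda>k. g (?X k \<omega> + ?L k)) \<longlonglongrightarrow> g (kolmogorov_pair B t \<omega> + drift_shift ?\<tau> N v)"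
      by (intro AE_I2 isCont_tendsto_compose[OF g_cont] tendsto_add X_lim
                riemann_of_step_drift_increments_tendsto)
    show "(\<lambda>\<omega>. g (?X k \<omega> + ?L k)) \<in> borel_measurable M" for k by measurable
  qed (use g in auto)
  moreover have "(\<lambda>k. \<integral>\<omega>. ?\<rho> \<omega> * g (?X k \<omega>) \<partial>M) \<longlonglongrightarrow> (\<integral>\<omega>. ?\<rho> \<omega> * g (kolmogorov_pair B t \<omega>) \<partial>M)"
  proof (rule integral_dominated_convergence[where w="?\<rho>"])
    show "AE \<omega> in M. (\<lambda>k. ?\<rho> \<omega> * g (?X k \<omega>)) \<longlonglongrightarrow> ?\<rho> \<omega> * g (kolmogorov_pair B t \<omega>)"
      by (intro AE_I2 tendsto_mult tendsto_const isCont_tendsto_compose[OF g_cont] X_lim)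
    show "AE \<omega> in M. norm (?\<rho> \<omega> * g (?X k \<omega>)) \<le> ?\<rho> \<omega>" for k
      using g(2,3) by (intro AE_I2) (simp add: girsanov_density_nonneg abs_mult mult_left_le)
    show "(\<lambda>\<omega>. ?\<rho> \<omega> * g (?X k \<omega>)) \<in> borel_measurable M" for k by measurable
  qed (use integrable_girsanov_density(1)[OF N \<tau>] in auto)
  ultimately show ?thesis
    unfolding discrete by (rule LIMSEQ_unique)
qed

lemma distr_kolmogorov_pair_translate:
  assumes N: "N > 0"
  shows "distr M borel (\<lambda>\<omega>. kolmogorov_pair B t \<omega> + drift_shift (t / real N) N v)
       = distr (density M (\<lambda>\<omega>. ennreal (girsanov_density B \<sigma> (t / real N) N v \<omega>))) borel (kolmogorov_pair B t)"
proof (rule finite_measure_eqI_continuous)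
  have \<tau>: "t / real N > 0" using t N by simp
  then have [measurable]: "girsanov_density B \<sigma> (t / real N) N v \<in> borel_measurable M"
    by (rule girsanov_density_measurable)
  let ?D = "density M (\<lambda>\<omega>. ennreal (girsanov_density B \<sigma> (t / real N) N v \<omega>))"
  have "finite_measure ?D"
    by (rule finite_measureI) (simp add: emeasure_density integrable_girsanov_density(2)[OF N \<tau>])
  then show "finite_measure (distr ?D borel (kolmogorov_pair B t))"
    by (rule finite_measure.finite_measure_distr) simp
  show "finite_measure (distr M borel (\<lambda>\<omega>. kolmogorov_pair B t \<omega> + drift_shift (t / real N) N v))"
    by (rule finite_measure_distr) simp
  fix g :: "(real ^ 'n) \<times> (real ^ 'n) \<Rightarrow> real"
  assume g: "continuous_on UNIV g" "\<And>x. 0 \<le> g x" "\<And>x. g x \<le> 1"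
  then have [measurable]: "g \<in> borel_measurable borel" by (intro borel_measurable_continuous_onI)
  show "(\<integral>x. g x \<partial>distr M borel (\<lambda>\<omega>. kolmogorov_pair B t \<omega> + drift_shift (t / real N) N v))
      = (\<integral>x. g x \<partial>distr ?D borel (kolmogorov_pair B t))"
    using \<tau> integral_kolmogorov_pair_translate_continuous[OF N g]
    by (simp add: integral_distr integral_density girsanov_density_nonneg)
qed simp_all

lemma kolmogorov_semigroup_eq_girsanov:
  assumes N: "N > 0" and [measurable]: "f \<in> borel_measurable borel"
    and shift: "drift_shift (t / real N) N v = (p - p', (\<xi> + t *\<^sub>R p) - (\<xi>' + t *\<^sub>R p'))"
  shows "kolmogorov_semigroup M B t f (p, \<xi>)
       = (\<integral>\<omega>. girsanov_density B \<sigma> (t / real N) N v \<omega> * f ((p', \<xi>' + t *\<^sub>R p') + kolmogorov_pair B t \<omega>) \<partial>M)"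
proof -
  let ?m = "(p', \<xi>' + t *\<^sub>R p')"
  have \<tau>: "t / real N > 0" using t N by simp
  then have [measurable]: "girsanov_density B \<sigma> (t / real N) N v \<in> borel_measurable M"
    by (rule girsanov_density_measurable)
  have "kolmogorov_semigroup M B t f (p, \<xi>)
      = (\<integral>\<omega>. f (?m + (kolmogorov_pair B t \<omega> + drift_shift (t / real N) N v)) \<partial>M)"
    unfolding kolmogorov_semigroup_def shift by (simp add: kolmogorov_pair_def algebra_simps)
  also have "\<dots> = (\<integral>y. f (?m + y) \<partial>distr M borel (\<lambda>\<omega>. kolmogorov_pair B t \<omega> + drift_shift (t / real N) N v))"
    by (simp add: integral_distr)
  also have "\<dots> = (\<integral>\<omega>. girsanov_density B \<sigma> (t / real N) N v \<omega> * f (?m + kolmogorov_pair B t \<omega>) \<partial>M)"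
    by (simp add: distr_kolmogorov_pair_translate[OF N] integral_distr integral_density girsanov_density_nonneg)
  finally show ?thesis .
qed


lemma powr_integral_mult_girsanov_density_le:
  assumes N: "N > 0" and \<alpha>: "\<alpha> > 1"
    and [measurable]: "u \<in> borel_measurable M" and u: "\<And>\<omega>. 0 \<le> u \<omega>" "\<And>\<omega>. u \<omega> \<le> K"
  shows "(\<integral>\<omega>. u \<omega> * girsanov_density B \<sigma> (t / real N) N v \<omega> \<partial>M) powr \<alpha>
       \<le> exp (\<alpha> / (\<alpha> - 1) * (t / real N * (\<Sum>j<N. \<Sum>i\<in>UNIV. (v j $ i)\<^sup>2) / (2 * \<sigma>\<^sup>2)))
         * (\<integral>\<omega>. u \<omega> powr \<alpha> \<partial>M)"
proof -
  let ?\<rho> = "girsanov_density B \<sigma> (t / real N) N v"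
  let ?W = "t / real N * (\<Sum>j<N. \<Sum>i\<in>UNIV. (v j $ i)\<^sup>2) / (2 * \<sigma>\<^sup>2)"
  define q where "q = \<alpha> / (\<alpha> - 1)"
  have \<tau>: "t / real N > 0" using t N by simp
  then have [measurable]: "?\<rho> \<in> borel_measurable M" by (rule girsanov_density_measurable)
  have moment: "(\<integral>\<^sup>+\<omega>. ennreal (?\<rho> \<omega> powr q) \<partial>M) = ennreal (exp (q * (q - 1) * ?W))"
    using nn_integral_girsanov_density_powr[OF N \<tau>, of v q] by (simp add: mult.assoc)
  then have "integrable M (\<lambda>\<omega>. ?\<rho> \<omega> powr q)"
    by (intro integrableI_nonneg) auto
  then have "(\<integral>\<omega>. u \<omega> * ?\<rho> \<omega> \<partial>M) powr \<alpha> \<le> (\<integral>\<omega>. u \<omega> powr \<alpha> \<partial>M) * (\<integral>\<omega>. ?\<rho> \<omega> powr q \<partial>M) powr (\<alpha> - 1)"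
    using u integrable_girsanov_density(1)[OF N \<tau>]
    by (intro powr_integral_mult_le_Holder[OF finite_measure_axioms \<alpha> q_def, where K=K])
       (simp_all add: girsanov_density_nonneg)
  also have "(\<integral>\<omega>. ?\<rho> \<omega> powr q \<partial>M) = exp (q * (q - 1) * ?W)"
    using moment by (subst integral_eq_nn_integral) auto
  also have "exp (q * (q - 1) * ?W) powr (\<alpha> - 1) = exp (q * (q - 1) * (\<alpha> - 1) * ?W)"
    by (simp add: exp_powr_real mult_ac)
  also have "q * (q - 1) * (\<alpha> - 1) = q"
  proof -
    have "(q - 1) * (\<alpha> - 1) = 1" using \<alpha> by (simp add: q_def field_simps)
    then show ?thesis by (simp add: mult.assoc)
  qed
  finally show ?thesis by (simp add: q_def mult.commute)
qed

end

end

section \<open>An almost optimal step drift\<close>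

lemma sum_of_nat_squares_lessThan: "(\<Sum>j<N. (real j)\<^sup>2) = real N * (real N - 1) * (2 * real N - 1) / 6"
  by (induction N) (simp_all add: field_simps power2_eq_square)

lemma sum_midpoint_weights: "(\<Sum>j<N. real N - real j - 1/2) = (real N)\<^sup>2 / 2"
proof -
  have "(\<Sum>j<N. real N - real j - 1/2) = (\<Sum>j<N. (real N - 1/2) - real j)"
    by (intro sum.cong refl) simp
  also have "\<dots> = real N * (real N - 1/2) - real N * (real N - 1) / 2"
    by (simp add: sum_subtractf sum_of_nat_lessThan)
  finally show ?thesis by (simp add: field_simps power2_eq_square)
qed

lemma sum_midpoint_weights_squared: "(\<Sum>j<N. (real N - real j - 1/2)\<^sup>2) = (real N)^3 / 3 - real N / 12"
proof -
  have "(\<Sum>j<N. (real N - real j - 1/2)\<^sup>2)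
      = (\<Sum>j<N. ((real N - 1/2)\<^sup>2 - (2 * (real N - 1/2)) * real j) + (real j)\<^sup>2)"
    by (intro sum.cong refl) (simp add: power2_eq_square algebra_simps)
  also have "\<dots> = (real N * (real N - 1/2)\<^sup>2 - (2 * (real N - 1/2)) * (real N * (real N - 1) / 2))
       + real N * (real N - 1) * (2 * real N - 1) / 6"
    by (simp only: sum.distrib sum_subtractf sum_constant card_lessThan sum_distrib_left[symmetric]
                   sum_of_nat_lessThan sum_of_nat_squares_lessThan)
  finally show ?thesis
    by (simp add: field_simps power2_eq_square power3_eq_cube)
qed

lemma sums_affine_in_midpoint_weights:
  fixes \<mu> \<kappa> :: real
  shows "(\<Sum>j<N. \<mu> + \<kappa> / real N * (real N - real j - 1/2)) = real N * \<mu> + \<kappa> / real N * (real N)\<^sup>2 / 2"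
    and "(\<Sum>j<N. (real N - real j - 1/2) * (\<mu> + \<kappa> / real N * (real N - real j - 1/2)))
         = \<mu> * ((real N)\<^sup>2 / 2) + \<kappa> / real N * ((real N)^3 / 3 - real N / 12)"
    and "(\<Sum>j<N. (\<mu> + \<kappa> / real N * (real N - real j - 1/2))\<^sup>2)
         = real N * \<mu>\<^sup>2 + 2 * \<mu> * \<kappa> / real N * ((real N)\<^sup>2 / 2) + (\<kappa> / real N)\<^sup>2 * ((real N)^3 / 3 - real N / 12)"
proof -
  define c where "c j = real N - real j - 1/2" for j
  have sum_c: "(\<Sum>j<N. c j) = (real N)\<^sup>2 / 2" and sum_c2: "(\<Sum>j<N. (c j)\<^sup>2) = (real N)^3 / 3 - real N / 12"
    unfolding c_def by (rule sum_midpoint_weights sum_midpoint_weights_squared)+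
  have "(\<Sum>j<N. \<mu> + \<kappa> / real N * c j) = real N * \<mu> + \<kappa> / real N * (\<Sum>j<N. c j)"
    by (simp add: sum.distrib sum_distrib_left)
  then show "(\<Sum>j<N. \<mu> + \<kappa> / real N * (real N - real j - 1/2)) = real N * \<mu> + \<kappa> / real N * (real N)\<^sup>2 / 2"
    unfolding sum_c by (simp only: c_def)
  have "(\<Sum>j<N. c j * (\<mu> + \<kappa> / real N * c j)) = (\<Sum>j<N. \<mu> * c j + \<kappa> / real N * (c j)\<^sup>2)"
    by (intro sum.cong refl) (simp add: power2_eq_square algebra_simps)
  also have "\<dots> = \<mu> * (\<Sum>j<N. c j) + \<kappa> / real N * (\<Sum>j<N. (c j)\<^sup>2)"
    by (simp add: sum.distrib sum_distrib_left)
  finally show "(\<Sum>j<N. (real N - real j - 1/2) * (\<mu> + \<kappa> / real N * (real N - real j - 1/2)))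
      = \<mu> * ((real N)\<^sup>2 / 2) + \<kappa> / real N * ((real N)^3 / 3 - real N / 12)"
    unfolding sum_c sum_c2 by (simp only: c_def)
  have "(\<Sum>j<N. (\<mu> + \<kappa> / real N * c j)\<^sup>2) = (\<Sum>j<N. \<mu>\<^sup>2 + 2 * \<mu> * \<kappa> / real N * c j + (\<kappa> / real N)\<^sup>2 * (c j)\<^sup>2)"
    by (intro sum.cong refl) (simp add: power2_eq_square algebra_simps)
  also have "\<dots> = real N * \<mu>\<^sup>2 + 2 * \<mu> * \<kappa> / real N * (\<Sum>j<N. c j) + (\<kappa> / real N)\<^sup>2 * (\<Sum>j<N. (c j)\<^sup>2)"
    by (simp add: sum.distrib sum_distrib_left)
  finally show "(\<Sum>j<N. (\<mu> + \<kappa> / real N * (real N - real j - 1/2))\<^sup>2)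
      = real N * \<mu>\<^sup>2 + 2 * \<mu> * \<kappa> / real N * ((real N)\<^sup>2 / 2) + (\<kappa> / real N)\<^sup>2 * ((real N)^3 / 3 - real N / 12)"
    unfolding sum_c sum_c2 by (simp only: c_def)
qed

text \<open>Among drifts h on [0, t] with integral a and first moment (integral of (t - s) h(s))
  equal to b, the energy is minimised by an affine one, of energy a^2/t + 12 (b - t a / 2)^2 / t^3.
  This is its step version with N blocks, with the slope corrected so that the constraints hold
  exactly; the price is the factor 1 / (1 - 1 / N^2) in the energy.\<close>
definition affine_step_drift :: "real \<Rightarrow> nat \<Rightarrow> real \<Rightarrow> real \<Rightarrow> nat \<Rightarrow> real" where
  "affine_step_drift t N a b j =
     (let \<kappa> = 12 * (b - t * a / 2) / (t\<^sup>2 * (1 - 1 / (real N)\<^sup>2))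
      in a / t - \<kappa> / 2 + \<kappa> * (real N - real j - 1/2) / real N)"

lemma affine_step_drift:
  fixes a b t :: real
  assumes N: "N \<ge> 2" and t: "t > 0"
  defines "w \<equiv> affine_step_drift t N a b"
  shows "t / real N * (\<Sum>j<N. w j) = a"
    and "(t / real N)\<^sup>2 * (\<Sum>j<N. (real N - real j - 1/2) * w j) = b"
    and "t / real N * (\<Sum>j<N. (w j)\<^sup>2) = a\<^sup>2 / t + 12 * (b - t * a / 2)\<^sup>2 / (t ^ 3 * (1 - 1 / (real N)\<^sup>2))"
proof -
  define \<epsilon> where "\<epsilon> = 1 / (real N)\<^sup>2"
  define \<kappa> where "\<kappa> = 12 * (b - t * a / 2) / (t\<^sup>2 * (1 - \<epsilon>))"
  define \<mu> where "\<mu> = a / t - \<kappa> / 2"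
  have Npos: "real N > 0" using N by simp
  have "(2::real)\<^sup>2 \<le> (real N)\<^sup>2" using N by (intro power_mono) auto
  then have \<epsilon>1: "1 - \<epsilon> > 0" by (simp add: \<epsilon>_def divide_less_eq_1) arith
  have \<epsilon>: "\<epsilon> * (real N)\<^sup>2 = 1" using Npos by (simp add: \<epsilon>_def)
  have w: "w j = \<mu> + \<kappa> / real N * (real N - real j - 1/2)" for j
    by (simp add: w_def affine_step_drift_def Let_def \<kappa>_def \<mu>_def \<epsilon>_def)
  have offset_slope: "\<mu> + \<kappa> / 2 = a / t" by (simp add: \<mu>_def)
  have \<kappa>: "t\<^sup>2 * \<kappa> * (1 - \<epsilon>) = 12 * (b - t * a / 2)"
    using t \<epsilon>1 unfolding \<kappa>_def by (simp add: field_simps)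
  have "t / real N * (\<Sum>j<N. w j) = t * (\<mu> + \<kappa> / 2)"
    unfolding w sums_affine_in_midpoint_weights using Npos by (simp add: field_simps power2_eq_square)
  then show "t / real N * (\<Sum>j<N. w j) = a" using t by (simp add: offset_slope)
  have "(t / real N)\<^sup>2 * (\<Sum>j<N. (real N - real j - 1/2) * w j) = t\<^sup>2 * (\<mu> / 2 + \<kappa> * (1/3 - \<epsilon> / 12))"
    unfolding w sums_affine_in_midpoint_weights using Npos \<epsilon>
    by (simp add: field_simps power2_eq_square power3_eq_cube)
  also have "\<dots> = t\<^sup>2 * ((\<mu> + \<kappa> / 2) / 2) + (t\<^sup>2 * \<kappa> * (1 - \<epsilon>)) / 12"
    by (simp add: field_simps)
  also have "\<dots> = b" unfolding offset_slope \<kappa> using t by (simp add: power2_eq_square field_simps)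
  finally show "(t / real N)\<^sup>2 * (\<Sum>j<N. (real N - real j - 1/2) * w j) = b" .
  have "t / real N * (\<Sum>j<N. (w j)\<^sup>2) = t * (\<mu>\<^sup>2 + \<mu> * \<kappa> + \<kappa>\<^sup>2 * (1/3 - \<epsilon> / 12))"
    unfolding w sums_affine_in_midpoint_weights using Npos \<epsilon>
    by (simp add: field_simps power2_eq_square power3_eq_cube)
  also have "\<dots> = t * (\<mu> + \<kappa> / 2)\<^sup>2 + (t\<^sup>2 * \<kappa> * (1 - \<epsilon>))\<^sup>2 / (12 * t ^ 3 * (1 - \<epsilon>))"
    using t \<epsilon>1 by (simp add: field_simps power2_eq_square power3_eq_cube)
  also have "\<dots> = a\<^sup>2 / t + 12 * (b - t * a / 2)\<^sup>2 / (t ^ 3 * (1 - \<epsilon>))"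
    unfolding offset_slope \<kappa> using t \<epsilon>1 by (simp add: field_simps power2_eq_square)
  finally show "t / real N * (\<Sum>j<N. (w j)\<^sup>2) = a\<^sup>2 / t + 12 * (b - t * a / 2)\<^sup>2 / (t ^ 3 * (1 - 1 / (real N)\<^sup>2))"
    by (simp add: \<epsilon>_def)
qed

lemma kolmogorov_harnack_exponent:
  fixes p \<xi> p' \<xi>' :: "real ^ 'n::finite"
  assumes "\<sigma> > 0" "t > 0" "c > 0"
  defines "a \<equiv> p - p'" and "b \<equiv> (\<xi> + t *\<^sub>R p) - (\<xi>' + t *\<^sub>R p')"
  shows "(\<Sum>i\<in>UNIV. (a $ i)\<^sup>2 / t + 12 * (b $ i - t * a $ i / 2)\<^sup>2 / (t ^ 3 * c)) / (2 * \<sigma>\<^sup>2)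
       = 6 / (\<sigma>\<^sup>2 * t ^ 3 * c) * (\<Sum>i\<in>UNIV. (t / 2 * (p' $ i - p $ i) + (\<xi>' $ i - \<xi> $ i))\<^sup>2)
         + 1 / (2 * \<sigma>\<^sup>2 * t) * (\<Sum>i\<in>UNIV. (p' $ i - p $ i)\<^sup>2)"
proof -
  have "(b $ i - t * a $ i / 2)\<^sup>2 = (t / 2 * (p' $ i - p $ i) + (\<xi>' $ i - \<xi> $ i))\<^sup>2" for i
  proof -
    have "b $ i - t * a $ i / 2 = - (t / 2 * (p' $ i - p $ i) + (\<xi>' $ i - \<xi> $ i))"
      by (simp add: a_def b_def field_simps)
    then show ?thesis by (metis power2_minus)
  qed
  moreover have "(a $ i)\<^sup>2 = (p' $ i - p $ i)\<^sup>2" for i by (simp add: a_def power2_commute)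
  ultimately have "(\<Sum>i\<in>UNIV. (a $ i)\<^sup>2 / t + 12 * (b $ i - t * a $ i / 2)\<^sup>2 / (t ^ 3 * c))
      = (\<Sum>i\<in>UNIV. (p' $ i - p $ i)\<^sup>2) / t
        + 12 * (\<Sum>i\<in>UNIV. (t / 2 * (p' $ i - p $ i) + (\<xi>' $ i - \<xi> $ i))\<^sup>2) / (t ^ 3 * c)"
    by (simp add: sum.distrib sum_divide_distrib sum_distrib_left)
  moreover have "(X / t + 12 * Y / (t ^ 3 * c)) / (2 * \<sigma>\<^sup>2)
      = 6 / (\<sigma>\<^sup>2 * t ^ 3 * c) * Y + 1 / (2 * \<sigma>\<^sup>2 * t) * X" for X Y
    using assms by (simp add: field_simps)
  ultimately show ?thesis by simp
qed

lemma kolmogorov_harnack_step_drift: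
  fixes M :: "'a measure" and B :: "real \<Rightarrow> 'a \<Rightarrow> real ^ 'n::finite"
    and \<sigma> t \<alpha> :: real and f :: "(real ^ 'n) \<times> (real ^ 'n) \<Rightarrow> real"
    and p \<xi> p' \<xi>' :: "real ^ 'n"
  assumes \<sigma>: "\<sigma> > 0" and BM: "brownian_motion M \<sigma> B"
    and [measurable]: "f \<in> borel_measurable borel" and f: "\<And>x. f x \<ge> 0" "bounded (range f)"
    and t: "t > 0" and \<alpha>: "\<alpha> > 1" and N: "N \<ge> 2"
  shows "(kolmogorov_semigroup M B t f (p, \<xi>)) powr \<alpha>
    \<le> exp (\<alpha> / (\<alpha> - 1) *
          (6 / (\<sigma>\<^sup>2 * t ^ 3 * (1 - 1 / (real N)\<^sup>2)) * (\<Sum>i\<in>UNIV. (t / 2 * (p' $ i - p $ i) + (\<xi>' $ i - \<xi> $ i))\<^sup>2)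
           + 1 / (2 * \<sigma>\<^sup>2 * t) * (\<Sum>i\<in>UNIV. (p' $ i - p $ i)\<^sup>2)))
      * kolmogorov_semigroup M B t (\<lambda>x. (f x) powr \<alpha>) (p', \<xi>')"
proof -
  define a where "a = p - p'"
  define b where "b = (\<xi> + t *\<^sub>R p) - (\<xi>' + t *\<^sub>R p')"
  define v where "v j = (\<chi> i. affine_step_drift t N (a $ i) (b $ i) j)" for j
  define u where "u \<omega> = f ((p', \<xi>' + t *\<^sub>R p') + kolmogorov_pair B t \<omega>)" for \<omega>
  have "N > 0" using N by simp
  have "drift_shift (t / real N) N v = (a, b)"
    using affine_step_drift(1,2)[OF N t] by (simp add: drift_shift_def v_def vec_eq_iff)
  then have P_f: "kolmogorov_semigroup M B t f (p, \<xi>)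
      = (\<integral>\<omega>. u \<omega> * girsanov_density B \<sigma> (t / real N) N v \<omega> \<partial>M)"
    using kolmogorov_semigroup_eq_girsanov[OF BM \<sigma> t \<open>N > 0\<close>] by (simp add: a_def b_def u_def mult.commute)
  have P_f\<alpha>: "kolmogorov_semigroup M B t (\<lambda>x. (f x) powr \<alpha>) (p', \<xi>') = (\<integral>\<omega>. u \<omega> powr \<alpha> \<partial>M)"
    by (simp add: kolmogorov_semigroup_def u_def kolmogorov_pair_def algebra_simps)
  have "(2::real)\<^sup>2 \<le> (real N)\<^sup>2" using N by (intro power_mono) auto
  then have "1 - 1 / (real N)\<^sup>2 > 0" by (simp add: divide_less_eq_1) arith
  have "t / real N * (\<Sum>j<N. \<Sum>i\<in>UNIV. (v j $ i)\<^sup>2)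
      = (\<Sum>i\<in>UNIV. (a $ i)\<^sup>2 / t + 12 * (b $ i - t * a $ i / 2)\<^sup>2 / (t ^ 3 * (1 - 1 / (real N)\<^sup>2)))"
    using affine_step_drift(3)[OF N t] by (subst sum.swap) (simp add: v_def sum_distrib_left)
  note energy = this[THEN arg_cong[where f="\<lambda>x. x / (2 * \<sigma>\<^sup>2)"],
                     unfolded kolmogorov_harnack_exponent[OF \<sigma> t \<open>1 - 1 / (real N)\<^sup>2 > 0\<close>] a_def b_def]
  have [measurable]: "kolmogorov_pair B t \<in> borel_measurable M"
    by (rule kolmogorov_pair_measurable[OF BM \<sigma> t])
  have "u \<in> borel_measurable M" unfolding u_def by measurable
  moreover obtain K where "\<And>x. f x \<le> K"
    using f(2) unfolding bounded_iff by (metis abs_le_D1 rangeI real_norm_def)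
  ultimately show ?thesis
    unfolding P_f P_f\<alpha> energy[symmetric] using f(1)
    by (intro powr_integral_mult_girsanov_density_le[OF BM \<sigma> t \<open>N > 0\<close> \<alpha>]) (simp_all add: u_def)
qed

theorem theorem2p9:
  fixes M :: "'a measure" and B :: "real \<Rightarrow> 'a \<Rightarrow> real ^ 'n"
    and \<sigma> t \<alpha> :: real and f :: "(real ^ 'n) \<times> (real ^ 'n) \<Rightarrow> real"
    and p \<xi> p' \<xi>' :: "real ^ 'n"
  assumes "\<sigma> > 0"
    and "brownian_motion M \<sigma> B"
    and "f \<in> borel_measurable borel"
    and "\<And>x. f x \<ge> 0"
    and "bounded (range f)"
    and "t > 0"
    and "\<alpha> > 1"
  shows "(kolmogorov_semigroup M B t f (p, \<xi>)) powr \<alpha>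
    \<le> exp (\<alpha> / (\<alpha> - 1) *
          (6 / (\<sigma>\<^sup>2 * t ^ 3) * (\<Sum>i\<in>UNIV. (t / 2 * (p' $ i - p $ i) + (\<xi>' $ i - \<xi> $ i))\<^sup>2)
           + 1 / (2 * \<sigma>\<^sup>2 * t) * (\<Sum>i\<in>UNIV. (p' $ i - p $ i)\<^sup>2)))
      * kolmogorov_semigroup M B t (\<lambda>x. (f x) powr \<alpha>) (p', \<xi>')"
proof -
  define C where "C \<epsilon> = exp (\<alpha> / (\<alpha> - 1) *
          (6 / (\<sigma>\<^sup>2 * t ^ 3 * (1 - \<epsilon>)) * (\<Sum>i\<in>UNIV. (t / 2 * (p' $ i - p $ i) + (\<xi>' $ i - \<xi> $ i))\<^sup>2)
           + 1 / (2 * \<sigma>\<^sup>2 * t) * (\<Sum>i\<in>UNIV. (p' $ i - p $ i)\<^sup>2)))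
      * kolmogorov_semigroup M B t (\<lambda>x. (f x) powr \<alpha>) (p', \<xi>')" for \<epsilon>
  have "(kolmogorov_semigroup M B t f (p, \<xi>)) powr \<alpha> \<le> C (1 / (real (Suc (Suc k)))\<^sup>2)" for k
    unfolding C_def by (rule kolmogorov_harnack_step_drift[OF assms]) simp
  moreover have "(\<lambda>k. 1 / real (Suc (Suc k))) \<longlonglongrightarrow> (0::real)"
    using LIMSEQ_Suc[OF LIMSEQ_Suc[OF lim_1_over_n]] by simp
  then have "(\<lambda>k. 1 / (real (Suc (Suc k)))\<^sup>2) \<longlonglongrightarrow> (0::real)"
    using tendsto_power[of _ 0 sequentially 2] by (fastforce simp: power_one_over)
  then have "(\<lambda>k. C (1 / (real (Suc (Suc k)))\<^sup>2)) \<longlonglongrightarrow> C 0"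
    unfolding C_def using assms(1,6) by (intro tendsto_intros) auto
  ultimately show ?thesis
    unfolding C_def[of 0, simplified] by (intro LIMSEQ_le_const) auto
qed

end
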